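(* Suppose $0<p<1$ and $q>0$. Let $(S,I)$ be an endemic equilibrium and $\kappa=d_SS+d_II$ (a positive constant). Then $\frac{\kappa}{d_I}\ge M_*$, where $M_*$ is the unique positive solution of $$\frac{N}{|\Omega|}=M_*+r_{\max}^{1/q}M_*^{\frac{1-p}{q}}.$$ Furthermore, if $d_S\le d_I$, then $\frac{\kappa}{d_I}\le\frac{N}{|\Omega|}$.
   Context: Let $\Omega\subset\mathbb R^n$ be a bounded domain with smooth boundary, $\nu$ the outward unit normal on $\partial\Omega$, and $|\Omega|$ its Lebesgue measure. Let $\beta,\gamma$ be positive Hölder continuous functions on $\bar\Omega$, $N>0$, $q>0$, $0<p<1$, and $d_S,d_I>0$. Consider the system $$d_S\Delta S-\beta S^qI^p+\gamma I=0,\quad d_I\Delta I+\beta S^qI^p-\gamma I=0\ \text{ in }\Omega,\qquad \partial_\nu S=\partial_\nu I=0\ \text{ on }\partial\Omega,\qquad \int_\Omega(S+I)=N.$$ An endemic equilibrium is a nonnegative classical solution $(S,I)$ with $I\not\equiv0$. Define $r=\gamma/\beta$ and $r_{\max}=\max_{\bar\Omega}r$. *)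

theory Defs
  imports "HOL-Analysis.Analysis"
begin

definition partial :: "'n::finite \<Rightarrow> (real^'n \<Rightarrow> real) \<Rightarrow> real^'n \<Rightarrow> real" where
  "partial i f x = frechet_derivative f (at x) (axis i 1)"

definition grad :: "(real^'n::finite \<Rightarrow> real) \<Rightarrow> real^'n \<Rightarrow> real^'n" where
  "grad f x = (\<chi> i. partial i f x)"

definition laplacian :: "(real^'n::finite \<Rightarrow> real) \<Rightarrow> real^'n \<Rightarrow> real" where
  "laplacian f x = (\<Sum>i\<in>UNIV. partial i (\<lambda>y. partial i f y) x)"

coinductive smooth_on :: "(real^'n::finite) set \<Rightarrow> (real^'n \<Rightarrow> real) \<Rightarrow> bool" for U where
  "continuous_on U f \<Longrightarrow> f differentiable_on U \<Longrightarrow> (\<forall>i. smooth_on U (\<lambda>x. partial i f x))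
     \<Longrightarrow> smooth_on U f"

definition C2_on :: "(real^'n::finite) set \<Rightarrow> (real^'n \<Rightarrow> real) \<Rightarrow> bool" where
  "C2_on U f \<longleftrightarrow> f differentiable_on U \<and> (\<forall>i. (\<lambda>x. partial i f x) differentiable_on U)
     \<and> (\<forall>i j. continuous_on U (\<lambda>x. partial j (\<lambda>y. partial i f y) x))"

text \<open>This is the standard characterisation of a bounded domain with smooth boundary.\<close>
definition smooth_defining_function :: "(real^'n::finite) set \<Rightarrow> (real^'n \<Rightarrow> real) \<Rightarrow> bool" where
  "smooth_defining_function \<Omega> \<rho> \<longleftrightarrow> smooth_on UNIV \<rho> \<and> \<Omega> = {x. \<rho> x < 0}
     \<and> (\<forall>x. \<rho> x = 0 \<longrightarrow> grad \<rho> x \<noteq> 0)"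

definition outward_normal :: "(real^'n::finite \<Rightarrow> real) \<Rightarrow> real^'n \<Rightarrow> real^'n" where
  "outward_normal \<rho> x = (1 / norm (grad \<rho> x)) *\<^sub>R grad \<rho> x"

definition bounded_smooth_domain :: "(real^'n::finite) set \<Rightarrow> (real^'n \<Rightarrow> real) \<Rightarrow> bool" where
  "bounded_smooth_domain \<Omega> \<rho> \<longleftrightarrow> open \<Omega> \<and> connected \<Omega> \<and> \<Omega> \<noteq> {} \<and> bounded \<Omega>
     \<and> smooth_defining_function \<Omega> \<rho>"

definition holder_on :: "(real^'n::finite) set \<Rightarrow> (real^'n \<Rightarrow> real) \<Rightarrow> bool" where
  "holder_on A f \<longleftrightarrow> (\<exists>\<alpha> C. 0 < \<alpha> \<and> \<alpha> \<le> 1 \<and>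
     (\<forall>x\<in>A. \<forall>y\<in>A. \<bar>f x - f y\<bar> \<le> C * dist x y powr \<alpha>))"

definition neumann_classical :: "(real^'n::finite) set \<Rightarrow> (real^'n \<Rightarrow> real) \<Rightarrow> (real^'n \<Rightarrow> real) \<Rightarrow> bool" where
  "neumann_classical \<Omega> \<rho> f \<longleftrightarrow> C2_on \<Omega> f \<and> continuous_on (closure \<Omega>) f \<and>
     (\<exists>G. continuous_on (closure \<Omega>) G \<and> (\<forall>x\<in>\<Omega>. G x = grad f x)
          \<and> (\<forall>x\<in>frontier \<Omega>. G x \<bullet> outward_normal \<rho> x = 0))"

definition endemic_equilibrium ::
  "(real^'n::finite) set \<Rightarrow> (real^'n \<Rightarrow> real) \<Rightarrow> real \<Rightarrow> real \<Rightarrow> (real^'n \<Rightarrow> real) \<Rightarrow> (real^'n \<Rightarrow> real)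
   \<Rightarrow> real \<Rightarrow> real \<Rightarrow> real \<Rightarrow> (real^'n \<Rightarrow> real) \<Rightarrow> (real^'n \<Rightarrow> real) \<Rightarrow> bool" where
  "endemic_equilibrium \<Omega> \<rho> dS dI \<beta> \<gamma> N q p S I \<longleftrightarrow>
     neumann_classical \<Omega> \<rho> S \<and> neumann_classical \<Omega> \<rho> I \<and>
     (\<forall>x\<in>closure \<Omega>. S x \<ge> 0 \<and> I x \<ge> 0) \<and> (\<exists>x\<in>\<Omega>. I x \<noteq> 0) \<and>
     (\<forall>x\<in>\<Omega>. dS * laplacian S x - \<beta> x * S x powr q * I x powr p + \<gamma> x * I x = 0) \<and>
     (\<forall>x\<in>\<Omega>. dI * laplacian I x + \<beta> x * S x powr q * I x powr p - \<gamma> x * I x = 0) \<and>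
     integral \<Omega> (\<lambda>x. S x + I x) = N"

end

theory Submission
  imports Defs
begin

text \<open>Adding the two equations shows that \<open>u = dS S + dI I\<close> is harmonic with homogeneous
  Neumann data; by the strong maximum principle, whose boundary case is Hopf's lemma, it is a
  constant \<open>\<kappa>\<close>, so that \<open>I \<le> \<kappa> / dI\<close>. The same principle applied to \<open>- I\<close> shows \<open>I > 0\<close>.
  At a maximum point of \<open>S\<close> the reaction term \<open>\<beta> S^q I^p - \<gamma> I\<close> cannot be positive, which gives
  \<open>S^q \<le> r_max (\<kappa> / dI)^(1 - p)\<close> everywhere. Integrating \<open>S + I\<close> over \<open>\<Omega>\<close> then yields
  \<open>N / |\<Omega>| \<le> K + r_max^(1/q) K^((1 - p)/q)\<close> for \<open>K = \<kappa> / dI\<close>, and since the right-hand side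
  increases with \<open>K\<close>, \<open>K \<ge> M\<^sub>*\<close>. If \<open>dS \<le> dI\<close>, then \<open>\<kappa> \<le> dI (S + I)\<close> pointwise, and
  integration gives \<open>\<kappa> / dI \<le> N / |\<Omega>|\<close>.\<close>

section \<open>Derivatives along lines and coordinate axes\<close>

lemma has_real_derivative_along_line:
  fixes f :: "'a::real_normed_vector \<Rightarrow> real"
  assumes "(f has_derivative f') (at (x + s *\<^sub>R v))"
  shows "((\<lambda>t. f (x + t *\<^sub>R v)) has_real_derivative f' v) (at s)"
proof -
  have "((\<lambda>t. x + t *\<^sub>R v) has_derivative (\<lambda>t. t *\<^sub>R v)) (at s)"
    by (auto intro!: derivative_eq_intros)
  from diff_chain_at[OF this] assms
  have "((\<lambda>t. f (x + t *\<^sub>R v)) has_derivative (\<lambda>t. f' (t *\<^sub>R v))) (at s)"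
    by (simp add: o_def)
  moreover have "f' (t *\<^sub>R v) = f' v * t" for t
    using linear_scale[OF has_derivative_linear[OF assms]] by simp
  ultimately show ?thesis
    by (simp add: has_field_derivative_def)
qed

lemma frechet_derivative_eq_sum_partial:
  fixes f :: "real^'n::finite \<Rightarrow> real"
  assumes "f differentiable (at x)"
  shows "frechet_derivative f (at x) h = (\<Sum>i\<in>UNIV. h$i * partial i f x)"
proof -
  have "linear (frechet_derivative f (at x))"
    using assms frechet_derivative_works has_derivative_linear by blast
  then have "frechet_derivative f (at x) (\<Sum>i\<in>UNIV. h $ i *s axis i 1)
      = (\<Sum>i\<in>UNIV. h$i * frechet_derivative f (at x) (axis i 1))"
    by (simp add: linear_sum linear_scale scalar_mult_eq_scaleR)
  then show ?thesis
    by (simp add: basis_expansion partial_def)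
qed

lemma has_derivative_inner_grad:
  fixes f :: "real^'n::finite \<Rightarrow> real"
  assumes "f differentiable (at x)"
  shows "(f has_derivative (\<lambda>h. grad f x \<bullet> h)) (at x)"
proof -
  have "frechet_derivative f (at x) = (\<lambda>h. grad f x \<bullet> h)"
    using frechet_derivative_eq_sum_partial[OF assms]
    by (simp add: fun_eq_iff grad_def inner_vec_def mult.commute)
  then show ?thesis
    using assms frechet_derivative_works by metis
qed

text \<open>\<open>D1 i\<close> and \<open>D2 i\<close> are the first and second derivatives of \<open>w\<close> along the \<open>i\<close>-th
  coordinate axis, so \<open>\<Sum>i. D2 i x\<close> plays the role of the Laplacian; the maximum principle
  needs nothing beyond these one-dimensional derivatives.\<close>
definition axis_derivs_on ::
  "(real^'n::finite) set \<Rightarrow> (real^'n \<Rightarrow> real) \<Rightarrow> ('n \<Rightarrow> real^'n \<Rightarrow> real) \<Rightarrow> ('n \<Rightarrow> real^'n \<Rightarrow> real) \<Rightarrow> bool"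
  where "axis_derivs_on U w D1 D2 \<longleftrightarrow> (\<forall>x\<in>U. \<forall>i.
     ((\<lambda>t. w (x + t *\<^sub>R axis i 1)) has_real_derivative D1 i x) (at 0) \<and>
     ((\<lambda>t. D1 i (x + t *\<^sub>R axis i 1)) has_real_derivative D2 i x) (at 0))"

lemma axis_derivs_on_subset:
  "axis_derivs_on U w D1 D2 \<Longrightarrow> V \<subseteq> U \<Longrightarrow> axis_derivs_on V w D1 D2"
  by (auto simp: axis_derivs_on_def)

lemma axis_derivs_on_add:
  assumes "axis_derivs_on U w D1 D2" "axis_derivs_on U v E1 E2"
  shows "axis_derivs_on U (\<lambda>x. w x + v x) (\<lambda>i x. D1 i x + E1 i x) (\<lambda>i x. D2 i x + E2 i x)"
  using assms by (auto simp: axis_derivs_on_def intro!: derivative_eq_intros)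

lemma axis_derivs_on_cmult:
  assumes "axis_derivs_on U w D1 D2"
  shows "axis_derivs_on U (\<lambda>x. a * w x) (\<lambda>i x. a * D1 i x) (\<lambda>i x. a * D2 i x)"
  using assms by (auto simp: axis_derivs_on_def intro!: derivative_eq_intros)

lemma axis_derivs_on_diff_const:
  assumes "axis_derivs_on U w D1 D2"
  shows "axis_derivs_on U (\<lambda>x. w x - k) D1 D2"
  using assms by (auto simp: axis_derivs_on_def intro!: derivative_eq_intros)

lemma C2_on_axis_derivs_on:
  assumes "C2_on U f" "open U"
  shows "axis_derivs_on U f (\<lambda>i. partial i f) (\<lambda>i. partial i (\<lambda>y. partial i f y))"
proof -
  have "((\<lambda>t. g (x + t *\<^sub>R axis i 1)) has_real_derivative partial i g x) (at 0)"
    if "g differentiable (at x)" for g :: "real^'n \<Rightarrow> real" and x i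
    using has_real_derivative_along_line[of g _ x 0] that
    by (simp add: partial_def frechet_derivative_works[symmetric])
  with assms show ?thesis
    by (auto simp: axis_derivs_on_def C2_on_def differentiable_on_eq_differentiable_at)
qed

lemma DERIV_second_nonpos_at_local_max:
  fixes g g' :: "real \<Rightarrow> real"
  assumes "r > 0"
    and g': "\<And>t. \<bar>t\<bar> < r \<Longrightarrow> (g has_real_derivative g' t) (at t)"
    and max: "\<And>t. \<bar>t\<bar> < r \<Longrightarrow> g t \<le> g 0"
    and g'': "(g' has_real_derivative d) (at 0)"
  shows "d \<le> 0"
proof (rule ccontr)
  assume "\<not> d \<le> 0"
  then obtain e where e: "e > 0" "\<And>s. 0 < s \<Longrightarrow> s < e \<Longrightarrow> g' 0 < g' s"
    using DERIV_pos_inc_right[OF g''] by force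
  have "g' 0 = 0"
    using DERIV_local_max[OF g'[of 0] \<open>r > 0\<close>] max \<open>r > 0\<close> by auto
  define t where "t = min e r / 2"
  have t: "0 < t" "t < e" "t < r"
    using e \<open>r > 0\<close> by (auto simp: t_def)
  obtain z where z: "0 < z" "z < t" "g t - g 0 = t * g' z"
    using MVT2[of 0 t g g'] g' t by force
  have "g' z > 0"
    using e(2)[of z] z t \<open>g' 0 = 0\<close> by simp
  then have "0 < t * g' z"
    using t(1) by simp
  with z(3) max[of t] t show False
    by simp
qed

lemma axis_laplacian_nonpos_at_local_max:
  fixes w :: "real^'n::finite \<Rightarrow> real"
  assumes "axis_derivs_on U w D1 D2" "r > 0" "ball x r \<subseteq> U" "\<forall>y\<in>ball x r. w y \<le> w x"
  shows "(\<Sum>i\<in>UNIV. D2 i x) \<le> 0"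
proof (rule sum_nonpos)
  fix i
  have "x \<in> U"
    using assms(2,3) by auto
  let ?e = "axis i 1 :: real^'n"
  have on_ball: "x + t *\<^sub>R ?e \<in> ball x r" if "\<bar>t\<bar> < r" for t
    using that by (simp add: dist_norm)
  show "D2 i x \<le> 0"
  proof (rule DERIV_second_nonpos_at_local_max[OF \<open>r > 0\<close>])
    fix t :: real assume t: "\<bar>t\<bar> < r"
    have "((\<lambda>s. w (x + t *\<^sub>R ?e + s *\<^sub>R ?e)) has_real_derivative D1 i (x + t *\<^sub>R ?e)) (at 0)"
      using assms(1,3) on_ball[OF t] by (auto simp: axis_derivs_on_def)
    then show "((\<lambda>t. w (x + t *\<^sub>R ?e)) has_real_derivative D1 i (x + t *\<^sub>R ?e)) (at t)"
      using DERIV_shift[of "\<lambda>t. w (x + t *\<^sub>R ?e)" _ 0 t]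
      by (simp add: algebra_simps)
    show "w (x + t *\<^sub>R ?e) \<le> w (x + 0 *\<^sub>R ?e)"
      using assms(4) on_ball[OF t] by simp
  next
    show "((\<lambda>t. D1 i (x + t *\<^sub>R ?e)) has_real_derivative D2 i x) (at 0)"
      using assms(1) \<open>x \<in> U\<close> by (auto simp: axis_derivs_on_def)
  qed
qed

lemma no_linear_decrease_if_deriv_tendsto_zero:
  fixes \<phi> \<phi>' :: "real \<Rightarrow> real"
  assumes "0 < s\<^sub>0" "0 < k" "continuous_on {0..s\<^sub>0} \<phi>"
    and deriv: "\<And>s. 0 < s \<Longrightarrow> s < s\<^sub>0 \<Longrightarrow> (\<phi> has_real_derivative \<phi>' s) (at s)"
    and lim: "(\<phi>' \<longlongrightarrow> 0) (at_right 0)"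
    and decrease: "\<And>s. 0 < s \<Longrightarrow> s < s\<^sub>0 \<Longrightarrow> \<phi> s \<le> \<phi> 0 - k * s"
  shows False
proof -
  have "\<forall>\<^sub>F s in at_right 0. dist (\<phi>' s) 0 < k / 2"
    using lim[unfolded tendsto_iff, rule_format, of "k / 2"] \<open>0 < k\<close> by simp
  then obtain e where e: "0 < e" "\<And>s. 0 < s \<Longrightarrow> s < e \<Longrightarrow> \<bar>\<phi>' s\<bar> < k / 2"
    by (auto simp: eventually_at_right_field)
  define s where "s = min e s\<^sub>0 / 2"
  have s: "0 < s" "s < e" "s < s\<^sub>0"
    using e \<open>0 < s\<^sub>0\<close> by (auto simp: s_def)
  have "continuous_on {0..s} \<phi>"
    using continuous_on_subset[OF assms(3)] s by auto
  moreover have "\<phi> differentiable (at z)" if "0 < z" "z < s" for z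
    using deriv[of z] that s by (auto simp: real_differentiable_def)
  ultimately obtain l z where z: "0 < z" "z < s" "(\<phi> has_real_derivative l) (at z)" "\<phi> s - \<phi> 0 = s * l"
    using MVT[OF s(1), of \<phi>] by auto
  have "l = \<phi>' z"
    using DERIV_unique[OF z(3) deriv[of z]] z s by simp
  then have "- (k / 2) < l"
    using e(2)[of z] z s by simp
  then have "s * (- (k / 2)) < s * l"
    using s(1) by (rule mult_strict_left_mono)
  moreover have "0 < k * s"
    using \<open>0 < k\<close> s(1) by simp
  ultimately show False
    using decrease[of s] s z(4) by (simp add: algebra_simps)
qed

lemma no_linear_decrease_along_ray_if_gradient_orthogonal:
  fixes w :: "real^'n::finite \<Rightarrow> real" and H :: "real^'n \<Rightarrow> real^'n"
  assumes "0 < s\<^sub>0" "0 < k"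
    and ray: "\<And>s. 0 \<le> s \<Longrightarrow> s \<le> s\<^sub>0 \<Longrightarrow> x\<^sub>0 + s *\<^sub>R v \<in> A"
    and "continuous_on A w" "continuous_on A H"
    and deriv: "\<And>s. 0 < s \<Longrightarrow> s < s\<^sub>0 \<Longrightarrow>
      (w has_derivative (\<lambda>h. H (x\<^sub>0 + s *\<^sub>R v) \<bullet> h)) (at (x\<^sub>0 + s *\<^sub>R v))"
    and orth: "H x\<^sub>0 \<bullet> v = 0"
    and decrease: "\<And>s. 0 < s \<Longrightarrow> s < s\<^sub>0 \<Longrightarrow> w (x\<^sub>0 + s *\<^sub>R v) \<le> w x\<^sub>0 - k * s"
  shows False
proof (rule no_linear_decrease_if_deriv_tendsto_zero[OF assms(1,2)])
  have path: "continuous_on {0..s\<^sub>0} (\<lambda>s. x\<^sub>0 + s *\<^sub>R v)" "(\<lambda>s. x\<^sub>0 + s *\<^sub>R v) ` {0..s\<^sub>0} \<subseteq> A"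
    by (intro continuous_intros) (use ray in auto)
  show "continuous_on {0..s\<^sub>0} (\<lambda>s. w (x\<^sub>0 + s *\<^sub>R v))"
    using continuous_on_compose2[OF assms(4) path] .
  have "continuous_on {0..s\<^sub>0} (\<lambda>s. H (x\<^sub>0 + s *\<^sub>R v) \<bullet> v)"
    using continuous_on_compose2[OF assms(5) path] by (rule continuous_on_inner) simp
  from bspec[OF this[unfolded continuous_on_def], of 0]
  show "((\<lambda>s. H (x\<^sub>0 + s *\<^sub>R v) \<bullet> v) \<longlongrightarrow> 0) (at_right 0)"
    using \<open>0 < s\<^sub>0\<close> orth
    by (auto simp: at_within_Icc_at_right)
  show "((\<lambda>s. w (x\<^sub>0 + s *\<^sub>R v)) has_real_derivative H (x\<^sub>0 + s *\<^sub>R v) \<bullet> v) (at s)"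
    if "0 < s" "s < s\<^sub>0" for s
    using has_real_derivative_along_line[OF deriv[OF that]] .
  show "w (x\<^sub>0 + s *\<^sub>R v) \<le> w (x\<^sub>0 + 0 *\<^sub>R v) - k * s" if "0 < s" "s < s\<^sub>0" for s
    using decrease[OF that] by simp
qed

section \<open>Hopf's lemma on a ball\<close>

definition gauss_barrier :: "real \<Rightarrow> real^'n::finite \<Rightarrow> real^'n \<Rightarrow> real" where
  "gauss_barrier \<alpha> y x = exp (- \<alpha> * (norm (x - y))\<^sup>2)"

lemma norm_add_axis_power2:
  fixes x y :: "real^'n::finite"
  shows "(norm (x + t *\<^sub>R axis i 1 - y))\<^sup>2 = (norm (x - y))\<^sup>2 + 2 * t * (x - y)$i + t\<^sup>2"
proof -
  have "x + t *\<^sub>R axis i 1 - y = (x - y) + t *\<^sub>R axis i 1"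
    by (simp add: algebra_simps)
  then have "(norm (x + t *\<^sub>R axis i 1 - y))\<^sup>2
      = (x - y) \<bullet> (x - y) + 2 * t * ((x - y) \<bullet> axis i 1) + t * t * (axis i 1 \<bullet> axis i (1::real))"
    by (simp add: power2_norm_eq_inner inner_commute algebra_simps)
  then show ?thesis
    by (simp add: inner_axis power2_norm_eq_inner[symmetric] power2_eq_square)
qed

lemma axis_derivs_on_gauss_barrier:
  "axis_derivs_on U (gauss_barrier \<alpha> y)
     (\<lambda>i x. - 2 * \<alpha> * (x - y)$i * gauss_barrier \<alpha> y x)
     (\<lambda>i x. gauss_barrier \<alpha> y x * (4 * \<alpha>\<^sup>2 * ((x - y)$i)\<^sup>2 - 2 * \<alpha>))"
  unfolding axis_derivs_on_def
proof (intro ballI allI conjI)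
  fix x i
  let ?a = "(x - y)$i" and ?n = "(norm (x - y))\<^sup>2"
  have line: "gauss_barrier \<alpha> y (x + t *\<^sub>R axis i 1) = exp (- \<alpha> * (?n + 2 * t * ?a + t\<^sup>2))"
    and coord: "(x + t *\<^sub>R axis i 1 - y)$i = ?a + t" for t
    by (simp_all add: gauss_barrier_def norm_add_axis_power2)
  show "((\<lambda>t. gauss_barrier \<alpha> y (x + t *\<^sub>R axis i 1)) has_real_derivative
      - 2 * \<alpha> * (x - y)$i * gauss_barrier \<alpha> y x) (at 0)"
    unfolding line by (auto intro!: derivative_eq_intros simp: gauss_barrier_def)
  show "((\<lambda>t. - 2 * \<alpha> * (x + t *\<^sub>R axis i 1 - y)$i * gauss_barrier \<alpha> y (x + t *\<^sub>R axis i 1))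
      has_real_derivative gauss_barrier \<alpha> y x * (4 * \<alpha>\<^sup>2 * ?a\<^sup>2 - 2 * \<alpha>)) (at 0)"
    unfolding line coord
    by (auto intro!: derivative_eq_intros simp: gauss_barrier_def algebra_simps power2_eq_square)
qed

lemma gauss_barrier_laplacian_gt:
  fixes x y :: "real^'n::finite" and \<alpha> C R :: real
  assumes "1 \<le> \<alpha>" "0 \<le> C" "2 * real CARD('n) + C + 1 \<le> \<alpha> * R\<^sup>2" "0 \<le> R" "R \<le> 2 * norm (x - y)"
  shows "C * gauss_barrier \<alpha> y x < (\<Sum>i\<in>UNIV. gauss_barrier \<alpha> y x * (4 * \<alpha>\<^sup>2 * ((x - y)$i)\<^sup>2 - 2 * \<alpha>))"
proof -
  let ?n = "real CARD('n)"
  have "(norm (x - y))\<^sup>2 = (\<Sum>i\<in>UNIV. ((x - y)$i)\<^sup>2)"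
    unfolding power2_norm_eq_inner by (simp add: inner_vec_def power2_eq_square)
  then have sum: "(\<Sum>i\<in>UNIV. gauss_barrier \<alpha> y x * (4 * \<alpha>\<^sup>2 * ((x - y)$i)\<^sup>2 - 2 * \<alpha>))
      = gauss_barrier \<alpha> y x * (4 * \<alpha>\<^sup>2 * (norm (x - y))\<^sup>2 - 2 * \<alpha> * ?n)"
    by (simp add: sum_distrib_left sum_subtractf sum_distrib_right[symmetric] algebra_simps)
  have "R\<^sup>2 \<le> (2 * norm (x - y))\<^sup>2"
    using assms(4,5) by (intro power_mono)
  then have "\<alpha>\<^sup>2 * R\<^sup>2 \<le> \<alpha>\<^sup>2 * (2 * norm (x - y))\<^sup>2"
    by (rule mult_left_mono) simp
  then have "\<alpha>\<^sup>2 * R\<^sup>2 \<le> 4 * \<alpha>\<^sup>2 * (norm (x - y))\<^sup>2"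
    by (simp add: power_mult_distrib)
  moreover have "\<alpha> * (C + 1) \<le> \<alpha> * (\<alpha> * R\<^sup>2 - 2 * ?n)"
    using assms(1,3) by (intro mult_left_mono) auto
  moreover have "C + 1 \<le> \<alpha> * (C + 1)"
    using assms(1,2) by simp
  ultimately have "C < 4 * \<alpha>\<^sup>2 * (norm (x - y))\<^sup>2 - 2 * \<alpha> * ?n"
    by (simp add: power2_eq_square algebra_simps)
  then show ?thesis
    unfolding sum by (simp add: gauss_barrier_def)
qed

lemma gauss_barrier_linear_growth:
  fixes x y :: "real^'n::finite"
  assumes "0 \<le> \<alpha>" "0 \<le> t" "t \<le> R" "norm (x - y) = R - t"
  shows "\<alpha> * R * exp (- \<alpha> * R\<^sup>2) * t \<le> gauss_barrier \<alpha> y x - exp (- \<alpha> * R\<^sup>2)"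
proof -
  have "\<alpha> * (R * t) \<le> \<alpha> * (R\<^sup>2 - (R - t)\<^sup>2)"
    using assms by (intro mult_left_mono) (auto simp: power2_eq_square algebra_simps)
  also have "\<dots> \<le> exp (\<alpha> * (R\<^sup>2 - (R - t)\<^sup>2)) - 1"
    using exp_ge_add_one_self[of "\<alpha> * (R\<^sup>2 - (R - t)\<^sup>2)"] by linarith
  finally have "exp (- \<alpha> * R\<^sup>2) * (\<alpha> * (R * t)) \<le> exp (- \<alpha> * R\<^sup>2) * (exp (\<alpha> * (R\<^sup>2 - (R - t)\<^sup>2)) - 1)"
    by (rule mult_left_mono) simp
  then show ?thesis
    unfolding gauss_barrier_def assms(4) by (simp add: algebra_simps flip: exp_add)
qed

lemma local_max_of_barrier_perturbation_nonpos:
  fixes w c :: "real^'n::finite \<Rightarrow> real" and R \<delta> \<alpha> C :: real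
  assumes "0 < \<delta>" "1 \<le> \<alpha>" "0 \<le> C" "2 * real CARD('n) + C + 1 \<le> \<alpha> * R\<^sup>2" "0 \<le> R"
    and "R \<le> 2 * norm (z - y)" "0 < r"
    and derivs: "axis_derivs_on (ball z r) w D1 D2"
    and ell: "c z * w z \<le> (\<Sum>i\<in>UNIV. D2 i z)" and c: "0 \<le> c z" "c z \<le> C"
    and max: "\<forall>x\<in>ball z r. w x + \<delta> * (gauss_barrier \<alpha> y x - exp (- \<alpha> * R\<^sup>2))
                         \<le> w z + \<delta> * (gauss_barrier \<alpha> y z - exp (- \<alpha> * R\<^sup>2))"
  shows "w z + \<delta> * (gauss_barrier \<alpha> y z - exp (- \<alpha> * R\<^sup>2)) \<le> 0"
proof (rule ccontr)
  define b where "b = gauss_barrier \<alpha> y z"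
  define L where "L = (\<Sum>i\<in>UNIV. gauss_barrier \<alpha> y z * (4 * \<alpha>\<^sup>2 * ((z - y)$i)\<^sup>2 - 2 * \<alpha>))"
  assume "\<not> w z + \<delta> * (gauss_barrier \<alpha> y z - exp (- \<alpha> * R\<^sup>2)) \<le> 0"
  moreover have "0 < \<delta> * exp (- \<alpha> * R\<^sup>2)"
    using \<open>0 < \<delta>\<close> by simp
  ultimately have "- (\<delta> * b) \<le> w z"
    by (simp add: b_def right_diff_distrib)
  then have "- (c z * (\<delta> * b)) \<le> c z * w z"
    using mult_left_mono[OF _ \<open>0 \<le> c z\<close>] by fastforce
  moreover have "c z * (\<delta> * b) \<le> C * (\<delta> * b)"
    using \<open>c z \<le> C\<close> \<open>0 < \<delta>\<close> by (intro mult_right_mono) (auto simp: b_def gauss_barrier_def)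
  moreover have "\<delta> * (C * b) < \<delta> * L"
    using gauss_barrier_laplacian_gt[OF assms(2-6)] \<open>0 < \<delta>\<close> by (simp add: L_def b_def)
  then have "C * (\<delta> * b) < \<delta> * L"
    by (simp add: ac_simps)
  moreover have "axis_derivs_on (ball z r) (\<lambda>x. w x + \<delta> * (gauss_barrier \<alpha> y x - exp (- \<alpha> * R\<^sup>2)))
      (\<lambda>i x. D1 i x + \<delta> * (- 2 * \<alpha> * (x - y)$i * gauss_barrier \<alpha> y x))
      (\<lambda>i x. D2 i x + \<delta> * (gauss_barrier \<alpha> y x * (4 * \<alpha>\<^sup>2 * ((x - y)$i)\<^sup>2 - 2 * \<alpha>)))"
    by (intro axis_derivs_on_add axis_derivs_on_cmult axis_derivs_on_diff_const
        axis_derivs_on_gauss_barrier derivs)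
  from axis_laplacian_nonpos_at_local_max[OF this \<open>0 < r\<close> order.refl max]
  have "(\<Sum>i\<in>UNIV. D2 i z) + \<delta> * L \<le> 0"
    by (simp add: L_def sum.distrib sum_distrib_left)
  ultimately show False
    using ell by linarith
qed

text \<open>With \<open>v = gauss_barrier \<alpha> y - exp (- \<alpha> R\<^sup>2)\<close>, the maximum of \<open>w + \<delta> v\<close> over the
  annulus is attained on its boundary, since the barrier term makes it a strict subsolution
  inside; there it is nonpositive, on the inner sphere by the choice of \<open>\<delta>\<close> and on the outer
  sphere because \<open>v\<close> vanishes there.\<close>
lemma hopf_barrier_comparison:
  fixes w c :: "real^'n::finite \<Rightarrow> real" and R \<delta> \<alpha> C :: real
  assumes "0 < R" "0 < \<delta>" "1 \<le> \<alpha>" "2 * real CARD('n) + C + 1 \<le> \<alpha> * R\<^sup>2"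
    and cont: "continuous_on (cball y R) w" and nonpos: "\<forall>x\<in>cball y R. w x \<le> 0"
    and inner: "\<forall>x\<in>sphere y (R / 2). w x \<le> - \<delta>"
    and derivs: "axis_derivs_on (ball y R) w D1 D2"
    and ell: "\<forall>x\<in>ball y R. c x * w x \<le> (\<Sum>i\<in>UNIV. D2 i x)"
    and c: "\<forall>x\<in>ball y R. 0 \<le> c x \<and> c x \<le> C"
  shows "\<forall>x\<in>cball y R - ball y (R / 2). w x + \<delta> * (gauss_barrier \<alpha> y x - exp (- \<alpha> * R\<^sup>2)) \<le> 0"
proof -
  define F where "F x = w x + \<delta> * (gauss_barrier \<alpha> y x - exp (- \<alpha> * R\<^sup>2))" for x
  define A where "A = cball y R - ball y (R / 2)"
  have "continuous_on A F"
    unfolding F_def gauss_barrier_def A_def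
    using continuous_on_subset[OF cont] by (intro continuous_intros) auto
  moreover have "sphere y R \<subseteq> A" "sphere y R \<noteq> {}" "compact A"
    using \<open>0 < R\<close> by (auto simp: A_def compact_diff)
  ultimately obtain z where "z \<in> A" and z_max: "\<forall>x\<in>A. F x \<le> F z"
    using continuous_attains_sup[of A F] by blast
  then consider "dist y z = R / 2" | "dist y z = R" | "R / 2 < dist y z" "dist y z < R"
    by (force simp: A_def)
  then have "F z \<le> 0"
  proof cases
    case 1
    then have "w z \<le> - \<delta>"
      using inner by simp
    moreover have "gauss_barrier \<alpha> y z \<le> 1"
      using \<open>1 \<le> \<alpha>\<close> by (simp add: gauss_barrier_def)
    then have "\<delta> * (gauss_barrier \<alpha> y z - exp (- \<alpha> * R\<^sup>2)) \<le> \<delta>"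
      using \<open>0 < \<delta>\<close> exp_gt_zero[of "- \<alpha> * R\<^sup>2"] by (intro mult_left_le) linarith+
    ultimately show ?thesis
      by (simp add: F_def)
  next
    case 2
    then show ?thesis
      using nonpos by (simp add: F_def gauss_barrier_def dist_norm norm_minus_commute)
  next
    case 3
    then obtain r where r: "0 < r" "ball z r \<subseteq> ball y R - cball y (R / 2)"
      using open_contains_ball[of "ball y R - cball y (R / 2)"] by force
    have "0 \<le> c y" "c y \<le> C"
      using c \<open>0 < R\<close> by auto
    moreover have "\<forall>x\<in>ball z r. F x \<le> F z"
      using r z_max by (auto simp: A_def)
    moreover have "axis_derivs_on (ball z r) w D1 D2"
      using axis_derivs_on_subset[OF derivs] r by blast
    ultimately show ?thesis
      unfolding F_def using 3 r ell c \<open>0 < R\<close>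
      by (intro local_max_of_barrier_perturbation_nonpos[OF \<open>0 < \<delta>\<close> \<open>1 \<le> \<alpha>\<close> _ assms(4)])
        (auto simp: dist_norm norm_minus_commute)
  qed
  with z_max have "\<forall>x\<in>A. F x \<le> 0"
    by force
  then show ?thesis
    by (simp add: A_def F_def)
qed

lemma continuous_neg_on_compact_bounded_away:
  fixes w :: "'a::topological_space \<Rightarrow> real"
  assumes "compact K" "K \<noteq> {}" "continuous_on K w" "\<forall>x\<in>K. w x < 0"
  obtains \<delta> where "0 < \<delta>" "\<forall>x\<in>K. w x \<le> - \<delta>"
proof -
  obtain s where "s \<in> K" "\<forall>x\<in>K. w x \<le> w s"
    using continuous_attains_sup[OF assms(1-3)] by blast
  show thesis
  proof (rule that)
    show "0 < - w s"
      using assms(4) \<open>s \<in> K\<close> by simp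
    show "\<forall>x\<in>K. w x \<le> - (- w s)"
      using \<open>\<forall>x\<in>K. w x \<le> w s\<close> by simp
  qed
qed

lemma norm_point_on_radius:
  fixes x\<^sub>0 y :: "'a::real_normed_vector"
  assumes "norm (x\<^sub>0 - y) = R" "0 < R" "0 \<le> t" "t \<le> R"
  shows "norm (x\<^sub>0 + (t / R) *\<^sub>R (y - x\<^sub>0) - y) = R - t"
proof -
  have "x\<^sub>0 + (t / R) *\<^sub>R (y - x\<^sub>0) - y = (1 - t / R) *\<^sub>R (x\<^sub>0 - y)"
    by (simp add: algebra_simps)
  then have "norm (x\<^sub>0 + (t / R) *\<^sub>R (y - x\<^sub>0) - y) = \<bar>1 - t / R\<bar> * R"
    using assms(1) by simp
  also have "\<dots> = R - t"
    using assms(2-4) by (simp add: field_simps)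
  finally show ?thesis .
qed

lemma hopf_lemma:
  fixes w c :: "real^'n::finite \<Rightarrow> real" and R C :: real
  assumes "0 < R" "norm (x\<^sub>0 - y) = R"
    and cont: "continuous_on (cball y R) w" and neg: "\<forall>x\<in>ball y R. w x < 0"
    and derivs: "axis_derivs_on (ball y R) w D1 D2"
    and ell: "\<forall>x\<in>ball y R. c x * w x \<le> (\<Sum>i\<in>UNIV. D2 i x)"
    and c: "\<forall>x\<in>ball y R. 0 \<le> c x \<and> c x \<le> C"
  shows "\<exists>k>0. \<forall>t. 0 < t \<and> t < R / 2 \<longrightarrow> w (x\<^sub>0 + (t / R) *\<^sub>R (y - x\<^sub>0)) \<le> - k * t"
proof -
  have nonpos: "\<forall>x\<in>cball y R. w x \<le> 0"
    using continuous_le_on_closure[of "ball y R" w _ 0] cont neg \<open>0 < R\<close>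
    by force
  have "sphere y (R / 2) \<subseteq> ball y R"
    using \<open>0 < R\<close> by auto
  then have "continuous_on (sphere y (R / 2)) w" "\<forall>x\<in>sphere y (R / 2). w x < 0"
    using continuous_on_subset[OF cont] neg by (auto dest: subset_trans[OF _ ball_subset_cball])
  moreover have "compact (sphere y (R / 2))" "sphere y (R / 2) \<noteq> {}"
    using \<open>0 < R\<close> by auto
  ultimately obtain \<delta> where "0 < \<delta>" and inner: "\<forall>x\<in>sphere y (R / 2). w x \<le> - \<delta>"
    using continuous_neg_on_compact_bounded_away by metis
  have "0 \<le> c y" "c y \<le> C"
    using c \<open>0 < R\<close> by auto
  define \<alpha> where "\<alpha> = max 1 ((2 * real CARD('n) + C + 1) / R\<^sup>2)"
  have "1 \<le> \<alpha>" "2 * real CARD('n) + C + 1 \<le> \<alpha> * R\<^sup>2"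
    using \<open>0 < R\<close> by (auto simp: \<alpha>_def max_def field_simps)
  note comparison = hopf_barrier_comparison[OF \<open>0 < R\<close> \<open>0 < \<delta>\<close> this cont nonpos inner derivs ell c]
  define k where "k = \<delta> * (\<alpha> * R * exp (- \<alpha> * R\<^sup>2))"
  have "0 < k"
    using \<open>0 < \<delta>\<close> \<open>1 \<le> \<alpha>\<close> \<open>0 < R\<close> by (simp add: k_def)
  moreover have "w (x\<^sub>0 + (t / R) *\<^sub>R (y - x\<^sub>0)) \<le> - k * t" if "0 < t" "t < R / 2" for t
  proof -
    define x where "x = x\<^sub>0 + (t / R) *\<^sub>R (y - x\<^sub>0)"
    have "norm (x - y) = R - t"
      unfolding x_def using norm_point_on_radius[OF assms(2,1)] that by simp
    then have "\<alpha> * R * exp (- \<alpha> * R\<^sup>2) * t \<le> gauss_barrier \<alpha> y x - exp (- \<alpha> * R\<^sup>2)"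
      and "x \<in> cball y R - ball y (R / 2)"
      using gauss_barrier_linear_growth[of \<alpha> t R x y] \<open>1 \<le> \<alpha>\<close> that
      by (auto simp: dist_norm norm_minus_commute)
    then have "w x + \<delta> * (gauss_barrier \<alpha> y x - exp (- \<alpha> * R\<^sup>2)) \<le> 0"
      and "\<delta> * (\<alpha> * R * exp (- \<alpha> * R\<^sup>2) * t) \<le> \<delta> * (gauss_barrier \<alpha> y x - exp (- \<alpha> * R\<^sup>2))"
      using comparison \<open>0 < \<delta>\<close> by (auto intro: mult_left_mono)
    then show ?thesis
      unfolding x_def k_def by (simp add: algebra_simps)
  qed
  ultimately show ?thesis
    by blast
qed

section \<open>The interior sphere condition\<close>

lemma smooth_onD:
  assumes "smooth_on U f"
  shows "continuous_on U f" "f differentiable_on U" "\<And>i. smooth_on U (\<lambda>x. partial i f x)"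
  using assms by (auto elim: smooth_on.cases)

lemma abs_sum_component_mult_le:
  fixes h :: "real^'n::finite"
  shows "\<bar>\<Sum>i\<in>UNIV. h$i * a i\<bar> \<le> norm h * (\<Sum>i\<in>UNIV. \<bar>a i\<bar>)"
proof -
  have "\<bar>\<Sum>i\<in>UNIV. h$i * a i\<bar> \<le> (\<Sum>i\<in>UNIV. \<bar>h$i\<bar> * \<bar>a i\<bar>)"
    by (rule order.trans[OF sum_abs]) (simp add: abs_mult)
  also have "\<dots> \<le> (\<Sum>i\<in>UNIV. norm h * \<bar>a i\<bar>)"
    by (intro sum_mono mult_right_mono) (auto simp: component_le_norm_cart)
  finally show ?thesis
    by (simp add: sum_distrib_left)
qed

lemma lipschitz_on_cball_if_continuous_partials:
  fixes f :: "real^'n::finite \<Rightarrow> real"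
  assumes "\<And>x. f differentiable (at x)" "\<And>j. continuous_on UNIV (partial j f)"
  obtains B where "0 < B" "\<forall>z\<in>cball x\<^sub>0 r. \<bar>f z - f x\<^sub>0\<bar> \<le> B * norm (z - x\<^sub>0)"
proof -
  define q where "q x = (\<Sum>j\<in>UNIV. \<bar>partial j f x\<bar>)" for x
  have "continuous_on (cball x\<^sub>0 r) q"
    unfolding q_def using assms(2) by (intro continuous_intros) (auto intro: continuous_on_subset)
  then have "bounded (q ` cball x\<^sub>0 r)"
    by (intro compact_imp_bounded compact_continuous_image) auto
  then obtain B where "0 < B" and B: "\<forall>x\<in>cball x\<^sub>0 r. q x \<le> B"
    unfolding bounded_pos by force
  have "\<bar>f z - f x\<^sub>0\<bar> \<le> B * norm (z - x\<^sub>0)" if "z \<in> cball x\<^sub>0 r" for z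
  proof -
    have "norm (f z - f x\<^sub>0) \<le> B * norm (z - x\<^sub>0)"
    proof (rule differentiable_bound[where f' = "\<lambda>x. frechet_derivative f (at x)"])
      show "convex (cball x\<^sub>0 r)" "z \<in> cball x\<^sub>0 r"
        using that by auto
      have "0 \<le> dist x\<^sub>0 z" "dist x\<^sub>0 z \<le> r"
        using that by simp_all
      then show "x\<^sub>0 \<in> cball x\<^sub>0 r"
        by (simp del: zero_le_dist)
      show "(f has_derivative frechet_derivative f (at x)) (at x within cball x\<^sub>0 r)" for x
        using assms(1) frechet_derivative_works has_derivative_at_withinI by blast
      show "onorm (frechet_derivative f (at x)) \<le> B" if "x \<in> cball x\<^sub>0 r" for x
      proof (rule onorm_le)
        fix h :: "real^'n"
        have "norm (frechet_derivative f (at x) h) \<le> norm h * q x"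
          unfolding frechet_derivative_eq_sum_partial[OF assms(1)] q_def
          by (simp add: abs_sum_component_mult_le)
        also have "\<dots> \<le> norm h * B"
          using B that by (intro mult_left_mono) auto
        finally show "norm (frechet_derivative f (at x) h) \<le> B * norm h"
          by (simp add: mult.commute)
      qed
    qed
    then show ?thesis
      by simp
  qed
  with \<open>0 < B\<close> show ?thesis
    using that by blast
qed

lemma smooth_on_second_order_upper_bound:
  fixes \<rho> :: "real^'n::finite \<Rightarrow> real"
  assumes "smooth_on UNIV \<rho>"
  obtains C where "0 < C" "\<forall>h. norm h \<le> 1 \<longrightarrow> \<rho> (x\<^sub>0 + h) \<le> \<rho> x\<^sub>0 + grad \<rho> x\<^sub>0 \<bullet> h + C * (norm h)\<^sup>2"
proof -
  have \<rho>_diff: "\<rho> differentiable (at x)" for x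
    using smooth_onD(2)[OF assms] by (simp add: differentiable_on_def)
  have "\<exists>B>0. \<forall>z\<in>cball x\<^sub>0 1. \<bar>partial i \<rho> z - partial i \<rho> x\<^sub>0\<bar> \<le> B * norm (z - x\<^sub>0)" for i
  proof (rule lipschitz_on_cball_if_continuous_partials)
    show "partial i \<rho> differentiable (at x)" for x
      using smooth_onD(2)[OF smooth_onD(3)[OF assms]] by (simp add: differentiable_on_def)
    show "continuous_on UNIV (partial j (partial i \<rho>))" for j
      using smooth_onD(1)[OF smooth_onD(3)[OF smooth_onD(3)[OF assms]]] .
  qed blast
  then obtain B where B: "\<And>i. 0 < B i"
    "\<And>i z. z \<in> cball x\<^sub>0 1 \<Longrightarrow> \<bar>partial i \<rho> z - partial i \<rho> x\<^sub>0\<bar> \<le> B i * norm (z - x\<^sub>0)"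
    by metis
  define C where "C = (\<Sum>i\<in>UNIV. B i)"
  have "0 < C"
    using B(1) by (simp add: C_def sum_pos)
  moreover have "\<rho> (x\<^sub>0 + h) \<le> \<rho> x\<^sub>0 + grad \<rho> x\<^sub>0 \<bullet> h + C * (norm h)\<^sup>2" if "norm h \<le> 1" for h
  proof -
    have "((\<lambda>s. \<rho> (x\<^sub>0 + s *\<^sub>R h)) has_real_derivative grad \<rho> (x\<^sub>0 + s *\<^sub>R h) \<bullet> h) (at s)" for s
      using has_real_derivative_along_line[OF has_derivative_inner_grad[OF \<rho>_diff]] .
    then obtain \<xi> where \<xi>: "0 < \<xi>" "\<xi> < 1" "\<rho> (x\<^sub>0 + h) - \<rho> x\<^sub>0 = grad \<rho> (x\<^sub>0 + \<xi> *\<^sub>R h) \<bullet> h"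
      using MVT2[of 0 1 "\<lambda>s. \<rho> (x\<^sub>0 + s *\<^sub>R h)"] by force
    have near: "norm (x\<^sub>0 + \<xi> *\<^sub>R h - x\<^sub>0) \<le> norm h"
      using \<xi> mult_left_le_one_le[of "norm h" \<xi>] by simp
    then have "x\<^sub>0 + \<xi> *\<^sub>R h \<in> cball x\<^sub>0 1"
      using that by (simp add: dist_norm)
    have "\<rho> (x\<^sub>0 + h) - \<rho> x\<^sub>0 - grad \<rho> x\<^sub>0 \<bullet> h
        = (\<Sum>i\<in>UNIV. h$i * (partial i \<rho> (x\<^sub>0 + \<xi> *\<^sub>R h) - partial i \<rho> x\<^sub>0))"
      using \<xi>(3) by (simp add: grad_def inner_vec_def sum_subtractf algebra_simps)
    also have "\<dots> \<le> norm h * (\<Sum>i\<in>UNIV. \<bar>partial i \<rho> (x\<^sub>0 + \<xi> *\<^sub>R h) - partial i \<rho> x\<^sub>0\<bar>)"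
      by (rule order.trans[OF abs_ge_self abs_sum_component_mult_le])
    also have "\<dots> \<le> norm h * (\<Sum>i\<in>UNIV. B i * norm h)"
      using B(2)[OF \<open>x\<^sub>0 + \<xi> *\<^sub>R h \<in> cball x\<^sub>0 1\<close>] near B(1)
      by (intro mult_left_mono sum_mono order.trans[OF _ mult_left_mono[OF near]]) (auto intro: less_imp_le)
    also have "\<dots> = C * (norm h)\<^sup>2"
      by (simp add: C_def sum_distrib_right[symmetric] power2_eq_square)
    finally show ?thesis
      by simp
  qed
  ultimately show ?thesis
    using that by blast
qed

lemma bounded_smooth_domain_frontier:
  assumes "bounded_smooth_domain \<Omega> \<rho>" "x\<^sub>0 \<in> frontier \<Omega>"
  shows "\<rho> x\<^sub>0 = 0" "grad \<rho> x\<^sub>0 \<noteq> 0"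
proof -
  have "\<Omega> = {x. \<rho> x < 0}" "open \<Omega>" "\<forall>x. \<rho> x = 0 \<longrightarrow> grad \<rho> x \<noteq> 0"
    and "continuous_on UNIV \<rho>"
    using assms(1) smooth_onD(1)
    by (auto simp: bounded_smooth_domain_def smooth_defining_function_def)
  moreover from this have "closure \<Omega> \<subseteq> {x. \<rho> x \<le> 0}"
    by (intro closure_minimal) (auto intro: closed_Collect_le continuous_on_const)
  moreover have "x\<^sub>0 \<in> closure \<Omega>" "x\<^sub>0 \<notin> \<Omega>"
    using assms(2) \<open>open \<Omega>\<close> by (auto simp: frontier_def interior_open)
  ultimately show "\<rho> x\<^sub>0 = 0" "grad \<rho> x\<^sub>0 \<noteq> 0"
    by force+
qed

lemma norm_outward_normal:
  "grad \<rho> x \<noteq> 0 \<Longrightarrow> norm (outward_normal \<rho> x) = 1"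
  by (simp add: outward_normal_def)

lemma mem_cball_along_unit_vector:
  fixes h \<nu> :: "'a::real_inner"
  assumes "norm \<nu> = 1" "norm (h + t *\<^sub>R \<nu>) \<le> t"
  shows "2 * t * (\<nu> \<bullet> h) \<le> - (norm h)\<^sup>2" "norm h \<le> 2 * t"
proof -
  have "0 \<le> t"
    using assms(2) norm_ge_zero order.trans by blast
  have "\<nu> \<bullet> \<nu> = 1"
    using power2_norm_eq_inner[of \<nu>] assms(1) by simp
  have "(norm (h + t *\<^sub>R \<nu>))\<^sup>2 = (h + t *\<^sub>R \<nu>) \<bullet> (h + t *\<^sub>R \<nu>)"
    by (rule power2_norm_eq_inner)
  also have "\<dots> = h \<bullet> h + 2 * t * (\<nu> \<bullet> h) + t\<^sup>2 * (\<nu> \<bullet> \<nu>)"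
    by (simp add: inner_commute algebra_simps power2_eq_square)
  finally have "(norm (h + t *\<^sub>R \<nu>))\<^sup>2 = (norm h)\<^sup>2 + 2 * t * (\<nu> \<bullet> h) + t\<^sup>2"
    using \<open>\<nu> \<bullet> \<nu> = 1\<close> by (simp add: power2_norm_eq_inner)
  moreover have "(norm (h + t *\<^sub>R \<nu>))\<^sup>2 \<le> t\<^sup>2"
    using assms(2) by (intro power_mono) auto
  ultimately show "2 * t * (\<nu> \<bullet> h) \<le> - (norm h)\<^sup>2"
    by linarith
  have "norm h \<le> norm (h + t *\<^sub>R \<nu>) + norm (t *\<^sub>R \<nu>)"
    using norm_triangle_ineq4[of "h + t *\<^sub>R \<nu>" "t *\<^sub>R \<nu>"] by simp
  then show "norm h \<le> 2 * t"
    using assms \<open>0 \<le> t\<close> by simp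
qed

text \<open>Taylor's bound \<open>\<rho> (x\<^sub>0 + h) \<le> \<bar>grad \<rho> x\<^sub>0\<bar> (\<nu> \<bullet> h) + C \<bar>h\<bar>\<^sup>2\<close> makes \<open>\<rho>\<close> negative on
  small balls that touch \<open>x\<^sub>0\<close> from the inside.\<close>
lemma interior_ball_at_boundary:
  fixes \<rho> :: "real^'n::finite \<Rightarrow> real"
  assumes "smooth_defining_function \<Omega> \<rho>" "\<rho> x\<^sub>0 = 0"
  obtains t\<^sub>0 where "0 < t\<^sub>0"
    "\<And>t. 0 < t \<Longrightarrow> t < t\<^sub>0 \<Longrightarrow> cball (x\<^sub>0 - t *\<^sub>R outward_normal \<rho> x\<^sub>0) t - {x\<^sub>0} \<subseteq> \<Omega>"
proof -
  define g where "g = grad \<rho> x\<^sub>0"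
  define \<nu> where "\<nu> = outward_normal \<rho> x\<^sub>0"
  have \<Omega>: "\<Omega> = {x. \<rho> x < 0}" and "g \<noteq> 0"
    using assms by (auto simp: smooth_defining_function_def g_def)
  then have "0 < norm g" "g = norm g *\<^sub>R \<nu>" "norm \<nu> = 1"
    by (auto simp: \<nu>_def g_def outward_normal_def)
  obtain C where "0 < C" and taylor: "\<forall>h. norm h \<le> 1 \<longrightarrow> \<rho> (x\<^sub>0 + h) \<le> \<rho> x\<^sub>0 + g \<bullet> h + C * (norm h)\<^sup>2"
    using smooth_on_second_order_upper_bound[of \<rho> x\<^sub>0] assms(1)
    unfolding smooth_defining_function_def g_def by blast
  define t\<^sub>0 where "t\<^sub>0 = min (1 / 2) (norm g / (2 * C))"
  have neg: "\<rho> (x\<^sub>0 + h) < 0" if "0 < t" "t < t\<^sub>0" "norm (h + t *\<^sub>R \<nu>) \<le> t" "h \<noteq> 0" for t h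
  proof -
    have "2 * t * (\<nu> \<bullet> h) \<le> - (norm h)\<^sup>2" "norm h \<le> 1"
      using mem_cball_along_unit_vector[OF \<open>norm \<nu> = 1\<close> that(3)] that(2) by (auto simp: t\<^sub>0_def)
    then have "\<rho> (x\<^sub>0 + h) \<le> norm g * (\<nu> \<bullet> h) + C * (norm h)\<^sup>2"
      using taylor assms(2) by (subst (asm) \<open>g = norm g *\<^sub>R \<nu>\<close>) simp
    also have "\<dots> \<le> norm g * (- (norm h)\<^sup>2 / (2 * t)) + C * (norm h)\<^sup>2"
    proof -
      have "\<nu> \<bullet> h \<le> - (norm h)\<^sup>2 / (2 * t)"
        using \<open>2 * t * (\<nu> \<bullet> h) \<le> _\<close> \<open>0 < t\<close> by (simp add: field_simps)
      then show ?thesis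
        using \<open>0 < norm g\<close> mult_left_mono by fastforce
    qed
    also have "\<dots> = (norm h)\<^sup>2 * (C - norm g / (2 * t))"
      using \<open>0 < t\<close> by (simp add: field_simps)
    also have "\<dots> < 0"
      using that \<open>0 < C\<close> by (intro mult_pos_neg) (auto simp: t\<^sub>0_def field_simps)
    finally show ?thesis .
  qed
  have "cball (x\<^sub>0 - t *\<^sub>R \<nu>) t - {x\<^sub>0} \<subseteq> \<Omega>" if "0 < t" "t < t\<^sub>0" for t
  proof
    fix y assume "y \<in> cball (x\<^sub>0 - t *\<^sub>R \<nu>) t - {x\<^sub>0}"
    then have "norm ((y - x\<^sub>0) + t *\<^sub>R \<nu>) \<le> t" "y - x\<^sub>0 \<noteq> 0"
      by (auto simp: dist_norm norm_minus_commute algebra_simps)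
    from neg[OF that this] show "y \<in> \<Omega>"
      by (simp add: \<Omega>)
  qed
  moreover have "0 < t\<^sub>0"
    using \<open>0 < C\<close> \<open>0 < norm g\<close> by (simp add: t\<^sub>0_def)
  ultimately show ?thesis
    using that unfolding \<nu>_def by blast
qed

section \<open>Strong maximum principle under Neumann boundary conditions\<close>

definition neumann_C1 ::
  "(real^'n::finite) set \<Rightarrow> (real^'n \<Rightarrow> real) \<Rightarrow> (real^'n \<Rightarrow> real) \<Rightarrow> (real^'n \<Rightarrow> real^'n) \<Rightarrow> bool"
  where "neumann_C1 \<Omega> \<rho> w H \<longleftrightarrow> continuous_on (closure \<Omega>) w \<and> continuous_on (closure \<Omega>) H \<and>
     (\<forall>x\<in>\<Omega>. (w has_derivative (\<lambda>h. H x \<bullet> h)) (at x)) \<and>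
     (\<forall>x\<in>frontier \<Omega>. H x \<bullet> outward_normal \<rho> x = 0)"

lemma neumann_C1_add:
  "neumann_C1 \<Omega> \<rho> w H \<Longrightarrow> neumann_C1 \<Omega> \<rho> v G \<Longrightarrow> neumann_C1 \<Omega> \<rho> (\<lambda>x. w x + v x) (\<lambda>x. H x + G x)"
  unfolding neumann_C1_def
  by (auto intro!: continuous_intros derivative_eq_intros simp: inner_add_left)

lemma neumann_C1_cmult:
  "neumann_C1 \<Omega> \<rho> w H \<Longrightarrow> neumann_C1 \<Omega> \<rho> (\<lambda>x. a * w x) (\<lambda>x. a *\<^sub>R H x)"
  unfolding neumann_C1_def
  by (auto intro!: continuous_intros derivative_eq_intros)

lemma neumann_C1_diff_const:
  "neumann_C1 \<Omega> \<rho> w H \<Longrightarrow> neumann_C1 \<Omega> \<rho> (\<lambda>x. w x - k) H"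
  unfolding neumann_C1_def
  by (auto intro!: continuous_intros derivative_eq_intros)

lemma interior_ball_near_boundary_point:
  fixes \<rho> :: "real^'n::finite \<Rightarrow> real"
  assumes "bounded_smooth_domain \<Omega> \<rho>" "x\<^sub>0 \<in> frontier \<Omega>" "0 < \<delta>"
  obtains t where "0 < t" "ball (x\<^sub>0 - t *\<^sub>R outward_normal \<rho> x\<^sub>0) t \<subseteq> \<Omega> \<inter> ball x\<^sub>0 \<delta>"
    "cball (x\<^sub>0 - t *\<^sub>R outward_normal \<rho> x\<^sub>0) t \<subseteq> closure \<Omega>"
proof -
  define \<nu> where "\<nu> = outward_normal \<rho> x\<^sub>0"
  have "norm \<nu> = 1"
    using bounded_smooth_domain_frontier[OF assms(1,2)] by (simp add: \<nu>_def norm_outward_normal)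
  obtain t\<^sub>0 where "0 < t\<^sub>0" and inside: "\<And>t. 0 < t \<Longrightarrow> t < t\<^sub>0 \<Longrightarrow> cball (x\<^sub>0 - t *\<^sub>R \<nu>) t - {x\<^sub>0} \<subseteq> \<Omega>"
    using interior_ball_at_boundary bounded_smooth_domain_frontier(1)[OF assms(1,2)] assms(1)
    unfolding bounded_smooth_domain_def \<nu>_def by blast
  define t where "t = min t\<^sub>0 \<delta> / 3"
  define y where "y = x\<^sub>0 - t *\<^sub>R \<nu>"
  have "0 < t" "t < t\<^sub>0" "2 * t < \<delta>"
    using \<open>0 < t\<^sub>0\<close> \<open>0 < \<delta>\<close> by (auto simp: t_def)
  have "dist x\<^sub>0 y = t"
    using \<open>norm \<nu> = 1\<close> \<open>0 < t\<close> by (simp add: y_def dist_norm)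
  have "cball y t - {x\<^sub>0} \<subseteq> \<Omega>"
    using inside[OF \<open>0 < t\<close> \<open>t < t\<^sub>0\<close>] by (simp add: y_def)
  moreover have "cball y t \<subseteq> ball x\<^sub>0 \<delta>"
  proof
    fix x assume "x \<in> cball y t"
    then have "dist x\<^sub>0 x \<le> t + t"
      using dist_triangle[of x\<^sub>0 x y] \<open>dist x\<^sub>0 y = t\<close> by simp
    then show "x \<in> ball x\<^sub>0 \<delta>"
      using \<open>2 * t < \<delta>\<close> by simp
  qed
  moreover have "x\<^sub>0 \<notin> ball y t" "x\<^sub>0 \<in> closure \<Omega>"
    using \<open>dist x\<^sub>0 y = t\<close> assms(2) by (auto simp: dist_commute frontier_def)
  ultimately have "ball y t \<subseteq> \<Omega> \<inter> ball x\<^sub>0 \<delta>" "cball y t \<subseteq> closure \<Omega>"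
    using closure_subset by auto
  with \<open>0 < t\<close> show thesis
    using that by (simp add: y_def \<nu>_def)
qed

text \<open>Hopf's lemma in an interior ball touching \<open>x\<^sub>0\<close> makes \<open>w\<close> decrease linearly along the
  inward normal, which the Neumann condition at \<open>x\<^sub>0\<close> forbids.\<close>
lemma neumann_boundary_point_not_max:
  fixes w c :: "real^'n::finite \<Rightarrow> real"
  assumes "bounded_smooth_domain \<Omega> \<rho>" "x\<^sub>0 \<in> frontier \<Omega>" "neumann_C1 \<Omega> \<rho> w H" "w x\<^sub>0 = 0"
    and "0 < \<delta>" and neg: "\<forall>x\<in>\<Omega> \<inter> ball x\<^sub>0 \<delta>. w x < 0"
    and derivs: "axis_derivs_on (\<Omega> \<inter> ball x\<^sub>0 \<delta>) w D1 D2"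
    and ell: "\<forall>x\<in>\<Omega> \<inter> ball x\<^sub>0 \<delta>. c x * w x \<le> (\<Sum>i\<in>UNIV. D2 i x)"
    and c: "\<forall>x\<in>\<Omega> \<inter> ball x\<^sub>0 \<delta>. 0 \<le> c x \<and> c x \<le> C"
  shows False
proof -
  have w_cont: "continuous_on (closure \<Omega>) w" and H_cont: "continuous_on (closure \<Omega>) H"
    and w_deriv: "\<forall>x\<in>\<Omega>. (w has_derivative (\<lambda>h. H x \<bullet> h)) (at x)"
    and neumann: "H x\<^sub>0 \<bullet> outward_normal \<rho> x\<^sub>0 = 0"
    using assms(2,3) by (auto simp: neumann_C1_def)
  define \<nu> where "\<nu> = outward_normal \<rho> x\<^sub>0"
  have "norm \<nu> = 1"
    using bounded_smooth_domain_frontier[OF assms(1,2)] by (simp add: \<nu>_def norm_outward_normal)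
  obtain t where "0 < t" and ball: "ball (x\<^sub>0 - t *\<^sub>R \<nu>) t \<subseteq> \<Omega> \<inter> ball x\<^sub>0 \<delta>"
    and cball: "cball (x\<^sub>0 - t *\<^sub>R \<nu>) t \<subseteq> closure \<Omega>"
    unfolding \<nu>_def by (rule interior_ball_near_boundary_point[OF assms(1,2) \<open>0 < \<delta>\<close>])
  define y where "y = x\<^sub>0 - t *\<^sub>R \<nu>"
  have "norm (x\<^sub>0 - y) = t"
    using \<open>norm \<nu> = 1\<close> \<open>0 < t\<close> by (simp add: y_def)
  moreover have "continuous_on (cball y t) w" "\<forall>x\<in>ball y t. w x < 0"
    "axis_derivs_on (ball y t) w D1 D2" "\<forall>x\<in>ball y t. c x * w x \<le> (\<Sum>i\<in>UNIV. D2 i x)"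
    "\<forall>x\<in>ball y t. 0 \<le> c x \<and> c x \<le> C"
    using continuous_on_subset[OF w_cont cball] neg ell c axis_derivs_on_subset[OF derivs ball] ball
    unfolding y_def by blast+
  ultimately obtain k where "0 < k" and k: "\<forall>s. 0 < s \<and> s < t / 2 \<longrightarrow> w (x\<^sub>0 + (s / t) *\<^sub>R (y - x\<^sub>0)) \<le> - k * s"
    using hopf_lemma[OF \<open>0 < t\<close>] by blast
  have ray: "x\<^sub>0 + s *\<^sub>R (- \<nu>) \<in> ball y t" if "0 < s" "s < 2 * t" for s
  proof -
    have "dist y (x\<^sub>0 + s *\<^sub>R (- \<nu>)) = \<bar>t - s\<bar>"
      using \<open>norm \<nu> = 1\<close> by (simp add: y_def dist_norm algebra_simps flip: scaleR_diff_left)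
    then show ?thesis
      using that by simp
  qed
  show False
  proof (rule no_linear_decrease_along_ray_if_gradient_orthogonal[of "t / 2" k x\<^sub>0 "- \<nu>" "closure \<Omega>" w H])
    show "0 < t / 2" "0 < k"
      using \<open>0 < t\<close> \<open>0 < k\<close> by simp_all
    show "continuous_on (closure \<Omega>) w" "continuous_on (closure \<Omega>) H"
      using w_cont H_cont .
    show "x\<^sub>0 + s *\<^sub>R - \<nu> \<in> closure \<Omega>" if "0 \<le> s" "s \<le> t / 2" for s
      using ray[of s] that \<open>0 < t\<close> cball assms(2) by (cases "s = 0") (auto simp: y_def frontier_def)
    show "(w has_derivative (\<lambda>h. H (x\<^sub>0 + s *\<^sub>R - \<nu>) \<bullet> h)) (at (x\<^sub>0 + s *\<^sub>R - \<nu>))"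
      if "0 < s" "s < t / 2" for s
      using w_deriv ray[of s] that ball by (auto simp: y_def)
    show "H x\<^sub>0 \<bullet> - \<nu> = 0"
      using neumann by (simp add: \<nu>_def)
    show "w (x\<^sub>0 + s *\<^sub>R - \<nu>) \<le> w x\<^sub>0 - k * s" if "0 < s" "s < t / 2" for s
      using k that \<open>0 < t\<close> assms(4) by (simp add: y_def)
  qed
qed

text \<open>Hopf's lemma forces a linear decrease of \<open>w\<close> from \<open>x\<^sub>0\<close> into the ball, although the
  gradient of \<open>w\<close> vanishes at the interior maximum \<open>x\<^sub>0\<close>.\<close>
lemma interior_max_not_on_negative_sphere:
  fixes w c :: "real^'n::finite \<Rightarrow> real" and H :: "real^'n \<Rightarrow> real^'n"
  assumes "open \<Omega>" "x\<^sub>0 \<in> \<Omega>" "0 < d" "norm (x\<^sub>0 - p) = d" "cball p d \<subseteq> \<Omega>"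
    and "continuous_on \<Omega> w" "continuous_on \<Omega> H" and w_deriv: "\<forall>x\<in>\<Omega>. (w has_derivative (\<lambda>h. H x \<bullet> h)) (at x)"
    and max: "\<forall>x\<in>\<Omega>. w x \<le> w x\<^sub>0" and "w x\<^sub>0 = 0" and neg: "\<forall>x\<in>ball p d. w x < 0"
    and derivs: "axis_derivs_on \<Omega> w D1 D2"
    and ell: "\<forall>x\<in>\<Omega>. c x * w x \<le> (\<Sum>i\<in>UNIV. D2 i x)"
    and c: "\<forall>x\<in>\<Omega>. 0 \<le> c x \<and> c x \<le> C"
  shows False
proof -
  define v where "v = (1 / d) *\<^sub>R (p - x\<^sub>0)"
  have "ball p d \<subseteq> \<Omega>"
    using assms(5) by auto
  then obtain k where "0 < k" and k: "\<forall>s. 0 < s \<and> s < d / 2 \<longrightarrow> w (x\<^sub>0 + (s / d) *\<^sub>R (p - x\<^sub>0)) \<le> - k * s"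
    using hopf_lemma[OF \<open>0 < d\<close> assms(4) continuous_on_subset[OF assms(6,5)] neg
        axis_derivs_on_subset[OF derivs]] ell c by blast
  have "(\<lambda>h. H x\<^sub>0 \<bullet> h) = (\<lambda>h. 0)"
    using differential_zero_maxmin[OF assms(2,1) bspec[OF w_deriv assms(2)]] max by blast
  then have "H x\<^sub>0 \<bullet> v = 0"
    by meson
  have ray: "x\<^sub>0 + s *\<^sub>R v \<in> cball p d" if "0 \<le> s" "s \<le> d" for s
    using norm_point_on_radius[OF assms(4,3) that] that
    by (simp add: v_def dist_norm norm_minus_commute)
  show False
  proof (rule no_linear_decrease_along_ray_if_gradient_orthogonal[of "d / 2" k x\<^sub>0 v "cball p d" w H])
    show "continuous_on (cball p d) w" "continuous_on (cball p d) H"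
      using continuous_on_subset assms(5-7) by blast+
    show "(w has_derivative (\<lambda>h. H (x\<^sub>0 + s *\<^sub>R v) \<bullet> h)) (at (x\<^sub>0 + s *\<^sub>R v))"
      if "0 < s" "s < d / 2" for s
      using w_deriv ray[of s] that assms(5) by auto
    show "w (x\<^sub>0 + s *\<^sub>R v) \<le> w x\<^sub>0 - k * s" if "0 < s" "s < d / 2" for s
      using k that \<open>w x\<^sub>0 = 0\<close> by (simp add: v_def)
  qed (use \<open>0 < d\<close> \<open>0 < k\<close> ray \<open>H x\<^sub>0 \<bullet> v = 0\<close> in auto)
qed

lemma nearest_point_ball_disjoint:
  fixes p :: "'a::heine_borel"
  assumes "closed K" "z \<in> K" "p \<notin> K"
  obtains x\<^sub>0 where "x\<^sub>0 \<in> K" "0 < dist p x\<^sub>0" "dist p x\<^sub>0 \<le> dist p z" "ball p (dist p x\<^sub>0) \<inter> K = {}"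
proof -
  have "K \<noteq> {}"
    using assms(2) by blast
  then obtain x\<^sub>0 where "x\<^sub>0 \<in> K" and closest: "\<And>x. x \<in> K \<Longrightarrow> dist p x\<^sub>0 \<le> dist p x"
    using distance_attains_inf[OF assms(1)] by blast
  show thesis
  proof (rule that[OF \<open>x\<^sub>0 \<in> K\<close>])
    show "0 < dist p x\<^sub>0"
      using \<open>x\<^sub>0 \<in> K\<close> assms(3) by auto
    show "dist p x\<^sub>0 \<le> dist p z"
      using closest[OF assms(2)] .
    show "ball p (dist p x\<^sub>0) \<inter> K = {}"
      using closest by (auto simp: not_le[symmetric])
  qed
qed

lemma open_zero_set_of_nonpos_subsolution:
  fixes w c :: "real^'n::finite \<Rightarrow> real" and H :: "real^'n \<Rightarrow> real^'n"
  assumes "open \<Omega>" "continuous_on \<Omega> w" "continuous_on \<Omega> H"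
    and w_deriv: "\<forall>x\<in>\<Omega>. (w has_derivative (\<lambda>h. H x \<bullet> h)) (at x)"
    and nonpos: "\<forall>x\<in>\<Omega>. w x \<le> 0"
    and derivs: "axis_derivs_on \<Omega> w D1 D2"
    and ell: "\<forall>x\<in>\<Omega>. c x * w x \<le> (\<Sum>i\<in>UNIV. D2 i x)"
    and c: "\<forall>x\<in>\<Omega>. 0 \<le> c x \<and> c x \<le> C"
  shows "open {x\<in>\<Omega>. w x = 0}"
  unfolding open_contains_ball
proof (intro ballI)
  fix z assume "z \<in> {x\<in>\<Omega>. w x = 0}"
  then obtain e where "0 < e" "cball z e \<subseteq> \<Omega>" "w z = 0"
    using open_contains_cball assms(1) by blast
  define r where "r = e / 2"
  have "0 < r" and B: "cball z (2 * r) \<subseteq> \<Omega>"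
    using \<open>0 < e\<close> \<open>cball z e \<subseteq> \<Omega>\<close> by (simp_all add: r_def)
  have "w p = 0" if "p \<in> ball z r" for p
  proof (rule ccontr)
    assume "w p \<noteq> 0"
    define K where "K = {x \<in> cball z (2 * r). w x = 0}"
    have "closed K"
      unfolding K_def using continuous_on_subset[OF assms(2) B]
      by (intro continuous_closed_preimage_constant) auto
    moreover have "z \<in> K" "p \<notin> K"
      using \<open>0 < r\<close> \<open>w z = 0\<close> \<open>w p \<noteq> 0\<close> by (simp_all add: K_def)
    ultimately obtain x\<^sub>0 where "x\<^sub>0 \<in> K" "0 < dist p x\<^sub>0" "dist p x\<^sub>0 \<le> dist p z"
      and miss: "ball p (dist p x\<^sub>0) \<inter> K = {}"
      by (rule nearest_point_ball_disjoint)
    define d where "d = dist p x\<^sub>0"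
    have "cball p d \<subseteq> cball z (2 * r)"
    proof
      fix x assume "x \<in> cball p d"
      then have "dist z x \<le> r + r"
        using \<open>dist p x\<^sub>0 \<le> dist p z\<close> that dist_triangle[of z x p] by (simp add: d_def dist_commute)
      then show "x \<in> cball z (2 * r)"
        by simp
    qed
    then have neg: "\<forall>x\<in>ball p d. w x < 0"
      using miss nonpos B by (force simp: K_def d_def less_le)
    have "x\<^sub>0 \<in> \<Omega>" "w x\<^sub>0 = 0" "norm (x\<^sub>0 - p) = d" "0 < d"
      using \<open>x\<^sub>0 \<in> K\<close> B \<open>0 < dist p x\<^sub>0\<close> by (auto simp: K_def d_def dist_norm norm_minus_commute)
    then show False
      using interior_max_not_on_negative_sphere[OF assms(1) \<open>x\<^sub>0 \<in> \<Omega>\<close> \<open>0 < d\<close> \<open>norm (x\<^sub>0 - p) = d\<close>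
          _ assms(2,3) w_deriv _ \<open>w x\<^sub>0 = 0\<close> neg derivs ell c]
        \<open>cball p d \<subseteq> cball z (2 * r)\<close> B nonpos by auto
  qed
  then show "\<exists>e>0. ball z e \<subseteq> {x\<in>\<Omega>. w x = 0}"
    using \<open>0 < r\<close> B by force
qed

lemma neumann_nonpos_subsolution_zero_inside:
  fixes w c :: "real^'n::finite \<Rightarrow> real"
  assumes "bounded_smooth_domain \<Omega> \<rho>" "neumann_C1 \<Omega> \<rho> w H"
    and derivs: "axis_derivs_on \<Omega> w D1 D2"
    and ell: "\<forall>x\<in>\<Omega>. c x * w x \<le> (\<Sum>i\<in>UNIV. D2 i x)"
    and c: "\<forall>x\<in>\<Omega>. 0 \<le> c x \<and> c x \<le> C"
    and nonpos: "\<forall>x\<in>closure \<Omega>. w x \<le> 0" and zero: "\<exists>x\<in>closure \<Omega>. w x = 0"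
  shows "\<exists>x\<in>\<Omega>. w x = 0"
proof (rule ccontr)
  assume "\<not> (\<exists>x\<in>\<Omega>. w x = 0)"
  then have neg: "\<forall>x\<in>\<Omega>. w x < 0"
    using nonpos closure_subset by force
  obtain x\<^sub>0 where "x\<^sub>0 \<in> closure \<Omega>" "w x\<^sub>0 = 0"
    using zero by blast
  moreover have "open \<Omega>"
    using assms(1) by (simp add: bounded_smooth_domain_def)
  ultimately have "x\<^sub>0 \<in> frontier \<Omega>"
    using neg by (auto simp: frontier_def interior_open)
  then show False
  proof (rule neumann_boundary_point_not_max[OF assms(1) _ assms(2) \<open>w x\<^sub>0 = 0\<close> zero_less_one])
    show "axis_derivs_on (\<Omega> \<inter> ball x\<^sub>0 1) w D1 D2"
      using axis_derivs_on_subset[OF derivs] by blast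
  qed (use neg ell c in auto)
qed

text \<open>The zero set of \<open>w\<close> in \<open>\<Omega>\<close> is open by Hopf's lemma, its negativity set by continuity;
  by connectedness one of them is empty, and the zero set is not.\<close>
theorem neumann_strong_maximum_principle:
  fixes w c :: "real^'n::finite \<Rightarrow> real"
  assumes "bounded_smooth_domain \<Omega> \<rho>" "neumann_C1 \<Omega> \<rho> w H"
    and derivs: "axis_derivs_on \<Omega> w D1 D2"
    and ell: "\<forall>x\<in>\<Omega>. c x * w x \<le> (\<Sum>i\<in>UNIV. D2 i x)"
    and c: "\<forall>x\<in>\<Omega>. 0 \<le> c x \<and> c x \<le> C"
    and nonpos: "\<forall>x\<in>closure \<Omega>. w x \<le> 0" and zero: "\<exists>x\<in>closure \<Omega>. w x = 0"
  shows "\<forall>x\<in>closure \<Omega>. w x = 0"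
proof -
  have "open \<Omega>" "connected \<Omega>"
    using assms(1) by (auto simp: bounded_smooth_domain_def)
  have w_cont: "continuous_on (closure \<Omega>) w" and H_cont: "continuous_on (closure \<Omega>) H"
    and w_deriv: "\<forall>x\<in>\<Omega>. (w has_derivative (\<lambda>h. H x \<bullet> h)) (at x)"
    using assms(2) by (auto simp: neumann_C1_def)
  then have "continuous_on \<Omega> w" "continuous_on \<Omega> H"
    using continuous_on_subset closure_subset by blast+
  have "open {x\<in>\<Omega>. w x = 0}"
    using open_zero_set_of_nonpos_subsolution[OF \<open>open \<Omega>\<close> \<open>continuous_on \<Omega> w\<close> \<open>continuous_on \<Omega> H\<close>
        w_deriv _ derivs ell c] nonpos closure_subset by blast
  moreover have "open {x\<in>\<Omega>. w x < 0}"
    using continuous_open_preimage[OF \<open>continuous_on \<Omega> w\<close> \<open>open \<Omega>\<close>, of "{..<0}"]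
    by (simp add: vimage_def Int_def)
  moreover have "\<Omega> \<subseteq> {x\<in>\<Omega>. w x = 0} \<union> {x\<in>\<Omega>. w x < 0}"
    using nonpos closure_subset by force
  moreover have "{x\<in>\<Omega>. w x = 0} \<inter> {x\<in>\<Omega>. w x < 0} \<inter> \<Omega> = {}"
    by auto
  ultimately have "{x\<in>\<Omega>. w x = 0} \<inter> \<Omega> = {} \<or> {x\<in>\<Omega>. w x < 0} \<inter> \<Omega> = {}"
    by (intro connectedD[OF \<open>connected \<Omega>\<close>])
  moreover have "\<exists>x\<in>\<Omega>. w x = 0"
    by (rule neumann_nonpos_subsolution_zero_inside[OF assms])
  ultimately have "{x\<in>\<Omega>. w x < 0} \<inter> \<Omega> = {}"
    by blast
  then have "w x = 0" if "x \<in> \<Omega>" for x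
    using nonpos closure_subset that by fastforce
  then show ?thesis
    using continuous_constant_on_closure[OF w_cont] by blast
qed

lemma neumann_no_max_where_strictly_subharmonic:
  fixes w :: "real^'n::finite \<Rightarrow> real"
  assumes "bounded_smooth_domain \<Omega> \<rho>" "neumann_C1 \<Omega> \<rho> w H"
    and derivs: "axis_derivs_on \<Omega> w D1 D2"
    and "x\<^sub>1 \<in> closure \<Omega>" and max: "\<forall>x\<in>closure \<Omega>. w x \<le> w x\<^sub>1"
    and "0 < d" and subharmonic: "\<forall>x\<in>\<Omega> \<inter> ball x\<^sub>1 d. 0 < (\<Sum>i\<in>UNIV. D2 i x)"
  shows False
proof -
  have "open \<Omega>"
    using assms(1) by (simp add: bounded_smooth_domain_def)
  then have "open (\<Omega> \<inter> ball x\<^sub>1 d)"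
    by (simp add: open_Int)
  have less: "w x < w x\<^sub>1" if "x \<in> \<Omega> \<inter> ball x\<^sub>1 d" for x
  proof (rule ccontr)
    assume "\<not> w x < w x\<^sub>1"
    have "w y \<le> w x" if "y \<in> \<Omega>" for y
      using max closure_subset that \<open>\<not> w x < w x\<^sub>1\<close> by force
    moreover obtain r where "0 < r" "ball x r \<subseteq> \<Omega> \<inter> ball x\<^sub>1 d"
      using open_contains_ball \<open>x \<in> \<Omega> \<inter> ball x\<^sub>1 d\<close> \<open>open (\<Omega> \<inter> ball x\<^sub>1 d)\<close> by blast
    ultimately have "(\<Sum>i\<in>UNIV. D2 i x) \<le> 0"
      by (intro axis_laplacian_nonpos_at_local_max[OF derivs \<open>0 < r\<close>]) auto
    with bspec[OF subharmonic that] show False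
      by linarith
  qed
  show False
  proof (cases "x\<^sub>1 \<in> \<Omega>")
    case True
    then show False
      using less[of x\<^sub>1] \<open>0 < d\<close> by simp
  next
    case False
    then have "x\<^sub>1 \<in> frontier \<Omega>"
      using \<open>x\<^sub>1 \<in> closure \<Omega>\<close> \<open>open \<Omega>\<close> by (simp add: frontier_def interior_open)
    show False
    proof (rule neumann_boundary_point_not_max[OF assms(1) \<open>x\<^sub>1 \<in> frontier \<Omega>\<close>
          neumann_C1_diff_const[OF assms(2)] _ \<open>0 < d\<close>, where c = "\<lambda>_. 0" and C = 0])
      show "axis_derivs_on (\<Omega> \<inter> ball x\<^sub>1 d) (\<lambda>x. w x - w x\<^sub>1) D1 D2"
        using axis_derivs_on_diff_const[OF axis_derivs_on_subset[OF derivs Int_lower1]] .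
      show "\<forall>x\<in>\<Omega> \<inter> ball x\<^sub>1 d. w x - w x\<^sub>1 < 0"
        using less by simp
      show "\<forall>x\<in>\<Omega> \<inter> ball x\<^sub>1 d. 0 * (w x - w x\<^sub>1) \<le> (\<Sum>i\<in>UNIV. D2 i x)"
        using subharmonic by (simp add: less_imp_le)
    qed simp_all
  qed
qed

section \<open>Endemic equilibria\<close>

lemma neumann_classical_imp_neumann_C1:
  assumes "neumann_classical \<Omega> \<rho> f" "open \<Omega>"
  obtains G where "neumann_C1 \<Omega> \<rho> f G"
    "axis_derivs_on \<Omega> f (\<lambda>i. partial i f) (\<lambda>i. partial i (\<lambda>y. partial i f y))"
proof -
  obtain G where G: "continuous_on (closure \<Omega>) G" "\<forall>x\<in>\<Omega>. G x = grad f x"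
    "\<forall>x\<in>frontier \<Omega>. G x \<bullet> outward_normal \<rho> x = 0"
    using assms(1) by (auto simp: neumann_classical_def)
  have "C2_on \<Omega> f" "continuous_on (closure \<Omega>) f"
    using assms(1) by (simp_all add: neumann_classical_def)
  have "(f has_derivative (\<lambda>h. G x \<bullet> h)) (at x)" if "x \<in> \<Omega>" for x
    using has_derivative_inner_grad[of f x] G(2) that \<open>C2_on \<Omega> f\<close> assms(2)
    by (auto simp: C2_on_def differentiable_on_eq_differentiable_at)
  show ?thesis
  proof (rule that)
    show "neumann_C1 \<Omega> \<rho> f G"
      using G \<open>continuous_on (closure \<Omega>) f\<close> \<open>\<And>x. x \<in> \<Omega> \<Longrightarrow> (f has_derivative _) _\<close>
      by (simp add: neumann_C1_def)
  qed (rule C2_on_axis_derivs_on[OF \<open>C2_on \<Omega> f\<close> assms(2)])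
qed

lemma holder_on_imp_continuous_on:
  fixes f :: "real^'n::finite \<Rightarrow> real"
  assumes "holder_on A f"
  shows "continuous_on A f"
proof -
  obtain \<alpha> C where "0 < \<alpha>" and holder: "\<forall>x\<in>A. \<forall>y\<in>A. \<bar>f x - f y\<bar> \<le> C * dist x y powr \<alpha>"
    using assms by (auto simp: holder_on_def)
  have "((\<lambda>y. f y - f x) \<longlongrightarrow> 0) (at x within A)" if "x \<in> A" for x
  proof (rule Lim_null_comparison)
    have "norm (f y - f x) \<le> C * dist y x powr \<alpha>" if "y \<in> A" for y
      using holder \<open>x \<in> A\<close> that by simp
    then show "\<forall>\<^sub>F y in at x within A. norm (f y - f x) \<le> C * dist y x powr \<alpha>"
      by (auto simp: eventually_at_filter intro: always_eventually)
    have "((\<lambda>y. dist y x) \<longlongrightarrow> 0) (at x within A)"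
      using tendsto_dist[where f = "\<lambda>y. y" and g = "\<lambda>y. x" and l = x and m = x] by simp
    then have "((\<lambda>y. dist y x powr \<alpha>) \<longlongrightarrow> 0) (at x within A)"
      by (rule tendsto_zero_powrI[OF _ tendsto_const]) (use \<open>0 < \<alpha>\<close> in auto)
    from tendsto_mult_right_zero[OF this, of C]
    show "((\<lambda>y. C * dist y x powr \<alpha>) \<longlongrightarrow> 0) (at x within A)" .
  qed
  then show ?thesis
    unfolding continuous_on_def by (subst Lim_null) blast
qed

lemma integral_le_const_measure:
  assumes "S \<in> lmeasurable" "f integrable_on S" "\<forall>x\<in>S. f x \<le> T"
  shows "integral S f \<le> T * measure lebesgue S"
proof -
  have "integral S f \<le> integral S (\<lambda>x. T)"
    by (rule integral_le[OF assms(2) integrable_on_const[OF assms(1)]]) (use assms(3) in simp)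
  also have "\<dots> = T * measure lebesgue S"
    using integral_mult_right[of S T "\<lambda>x. 1"] lmeasure_integral[OF assms(1)] by simp
  finally show ?thesis .
qed

lemma const_measure_le_integral:
  assumes "S \<in> lmeasurable" "f integrable_on S" "\<forall>x\<in>S. T \<le> f x"
  shows "T * measure lebesgue S \<le> integral S f"
proof -
  have "integral S (\<lambda>x. T) \<le> integral S f"
    by (rule integral_le[OF integrable_on_const[OF assms(1)] assms(2)]) (use assms(3) in simp)
  moreover have "integral S (\<lambda>x. T) = T * measure lebesgue S"
    using integral_mult_right[of S T "\<lambda>x. 1"] lmeasure_integral[OF assms(1)] by simp
  ultimately show ?thesis
    by simp
qed

lemma le_of_add_mult_powr_le:
  fixes a e M K :: real
  assumes "0 \<le> a" "0 \<le> e" "0 < K" "M + a * M powr e \<le> K + a * K powr e"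
  shows "M \<le> K"
proof (rule ccontr)
  assume "\<not> M \<le> K"
  then have "a * K powr e \<le> a * M powr e"
    using assms by (intro mult_left_mono powr_mono2) auto
  with assms(4) \<open>\<not> M \<le> K\<close> show False
    by linarith
qed

locale sis_equilibrium =
  fixes \<Omega> :: "(real^'n::finite) set" and \<rho> \<beta> \<gamma> S I :: "real^'n \<Rightarrow> real" and N q p dS dI :: real
  assumes domain: "bounded_smooth_domain \<Omega> \<rho>"
    and \<beta>_pos: "\<forall>x\<in>closure \<Omega>. 0 < \<beta> x" and \<gamma>_pos: "\<forall>x\<in>closure \<Omega>. 0 < \<gamma> x"
    and \<beta>_cont: "continuous_on (closure \<Omega>) \<beta>" and \<gamma>_cont: "continuous_on (closure \<Omega>) \<gamma>"
    and N_pos: "0 < N" and q_pos: "0 < q" and p_pos: "0 < p" and p_less_1: "p < 1"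
    and dS_pos: "0 < dS" and dI_pos: "0 < dI"
    and equilibrium: "endemic_equilibrium \<Omega> \<rho> dS dI \<beta> \<gamma> N q p S I"
begin

definition reaction :: "real^'n \<Rightarrow> real" where
  "reaction x = \<beta> x * S x powr q * I x powr p - \<gamma> x * I x"

definition r_max :: real where
  "r_max = Sup ((\<lambda>x. \<gamma> x / \<beta> x) ` closure \<Omega>)"

lemma open_domain: "open \<Omega>"
  and compact_closure_domain: "compact (closure \<Omega>)"
  and closure_domain_nonempty: "closure \<Omega> \<noteq> {}"
  and lmeasurable_domain: "\<Omega> \<in> lmeasurable"
  using domain by (auto simp: bounded_smooth_domain_def compact_closure lmeasurable_open)

lemma S_nonneg: "x \<in> closure \<Omega> \<Longrightarrow> 0 \<le> S x"
  and I_nonneg: "x \<in> closure \<Omega> \<Longrightarrow> 0 \<le> I x"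
  and I_nonzero: "\<exists>x\<in>\<Omega>. I x \<noteq> 0"
  and S_laplacian: "x \<in> \<Omega> \<Longrightarrow> dS * laplacian S x = reaction x"
  and I_laplacian: "x \<in> \<Omega> \<Longrightarrow> dI * laplacian I x = - reaction x"
  and total_mass: "integral \<Omega> (\<lambda>x. S x + I x) = N"
  using equilibrium by (auto simp: endemic_equilibrium_def reaction_def)

lemma neumann_data:
  obtains GS GI where "neumann_C1 \<Omega> \<rho> S GS" "neumann_C1 \<Omega> \<rho> I GI"
    "axis_derivs_on \<Omega> S (\<lambda>i. partial i S) (\<lambda>i. partial i (\<lambda>y. partial i S y))"
    "axis_derivs_on \<Omega> I (\<lambda>i. partial i I) (\<lambda>i. partial i (\<lambda>y. partial i I y))"
proof -
  have "neumann_classical \<Omega> \<rho> S" "neumann_classical \<Omega> \<rho> I"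
    using equilibrium by (simp_all add: endemic_equilibrium_def)
  obtain GS where "neumann_C1 \<Omega> \<rho> S GS" "axis_derivs_on \<Omega> S (\<lambda>i. partial i S) (\<lambda>i. partial i (\<lambda>y. partial i S y))"
    by (rule neumann_classical_imp_neumann_C1[OF \<open>neumann_classical \<Omega> \<rho> S\<close> open_domain])
  moreover obtain GI where "neumann_C1 \<Omega> \<rho> I GI" "axis_derivs_on \<Omega> I (\<lambda>i. partial i I) (\<lambda>i. partial i (\<lambda>y. partial i I y))"
    by (rule neumann_classical_imp_neumann_C1[OF \<open>neumann_classical \<Omega> \<rho> I\<close> open_domain])
  ultimately show thesis
    using that by blast
qed

lemma S_cont: "continuous_on (closure \<Omega>) S"
  and I_cont: "continuous_on (closure \<Omega>) I"
  using equilibrium by (simp_all add: endemic_equilibrium_def neumann_classical_def)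

lemma reaction_cont: "continuous_on (closure \<Omega>) reaction"
  unfolding reaction_def using S_cont I_cont \<beta>_cont \<gamma>_cont S_nonneg I_nonneg q_pos p_pos
  by (intro continuous_intros continuous_on_powr') auto

lemma ratio_le_r_max: "x \<in> closure \<Omega> \<Longrightarrow> \<gamma> x / \<beta> x \<le> r_max"
proof -
  have "continuous_on (closure \<Omega>) (\<lambda>x. \<gamma> x / \<beta> x)"
    using \<gamma>_cont \<beta>_cont \<beta>_pos by (intro continuous_intros) auto
  then have "bdd_above ((\<lambda>x. \<gamma> x / \<beta> x) ` closure \<Omega>)"
    by (intro bounded_imp_bdd_above compact_imp_bounded compact_continuous_image compact_closure_domain)
  then show "x \<in> closure \<Omega> \<Longrightarrow> \<gamma> x / \<beta> x \<le> r_max"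
    unfolding r_max_def by (intro cSup_upper) auto
qed

lemma r_max_pos: "0 < r_max"
proof -
  obtain x where "x \<in> closure \<Omega>"
    using closure_domain_nonempty closure_subset by auto
  moreover have "0 < \<gamma> x / \<beta> x"
    using \<beta>_pos \<gamma>_pos \<open>x \<in> closure \<Omega>\<close> by simp
  ultimately show ?thesis
    using ratio_le_r_max[of x] by linarith
qed

lemma integrable_total: "(\<lambda>x. S x + I x) integrable_on \<Omega>"
  using total_mass N_pos not_integrable_integral by fastforce

end

context sis_equilibrium
begin

lemma total_density_constant:
  obtains \<kappa> where "0 < \<kappa>" "\<forall>x\<in>closure \<Omega>. dS * S x + dI * I x = \<kappa>"
proof -
  obtain GS GI where nS: "neumann_C1 \<Omega> \<rho> S GS" and nI: "neumann_C1 \<Omega> \<rho> I GI"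
    and dS: "axis_derivs_on \<Omega> S (\<lambda>i. partial i S) (\<lambda>i. partial i (\<lambda>y. partial i S y))"
    and dI: "axis_derivs_on \<Omega> I (\<lambda>i. partial i I) (\<lambda>i. partial i (\<lambda>y. partial i I y))"
    by (rule neumann_data)
  define u where "u x = dS * S x + dI * I x" for x
  have "continuous_on (closure \<Omega>) u"
    unfolding u_def using S_cont I_cont by (intro continuous_intros)
  then obtain x\<^sub>m where "x\<^sub>m \<in> closure \<Omega>" and max: "\<forall>x\<in>closure \<Omega>. u x \<le> u x\<^sub>m"
    using continuous_attains_sup[OF compact_closure_domain closure_domain_nonempty] by blast
  have const: "\<forall>x\<in>closure \<Omega>. u x - u x\<^sub>m = 0"
  proof (rule neumann_strong_maximum_principle[OF domain, where c = "\<lambda>_. 0" and C = 0])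
    show "neumann_C1 \<Omega> \<rho> (\<lambda>x. u x - u x\<^sub>m) (\<lambda>x. dS *\<^sub>R GS x + dI *\<^sub>R GI x)"
      unfolding u_def by (intro neumann_C1_diff_const neumann_C1_add neumann_C1_cmult nS nI)
    show "axis_derivs_on \<Omega> (\<lambda>x. u x - u x\<^sub>m)
        (\<lambda>i x. dS * partial i S x + dI * partial i I x)
        (\<lambda>i x. dS * partial i (\<lambda>y. partial i S y) x + dI * partial i (\<lambda>y. partial i I y) x)"
      unfolding u_def by (intro axis_derivs_on_diff_const axis_derivs_on_add axis_derivs_on_cmult dS dI)
    show "\<forall>x\<in>\<Omega>. 0 * (u x - u x\<^sub>m)
        \<le> (\<Sum>i\<in>UNIV. dS * partial i (\<lambda>y. partial i S y) x + dI * partial i (\<lambda>y. partial i I y) x)"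
      using S_laplacian I_laplacian
      by (simp add: laplacian_def sum.distrib flip: sum_distrib_left)
  qed (use max \<open>x\<^sub>m \<in> closure \<Omega>\<close> in auto)
  obtain x where "x \<in> \<Omega>" "I x \<noteq> 0"
    using I_nonzero by blast
  moreover have "x \<in> closure \<Omega>"
    using \<open>x \<in> \<Omega>\<close> closure_subset by blast
  ultimately have "0 < u x" "x \<in> closure \<Omega>"
    using S_nonneg[of x] I_nonneg[of x] dS_pos dI_pos
    by (auto simp: u_def intro!: add_nonneg_pos)
  then show ?thesis
    using that[of "u x\<^sub>m"] const by (auto simp: u_def)
qed

lemma neg_infected_subsolution:
  assumes "y \<in> \<Omega>"
  shows "\<gamma> y / dI * (- 1 * I y) \<le> (\<Sum>i\<in>UNIV. - 1 * partial i (\<lambda>z. partial i I z) y)"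
proof -
  have "0 < \<beta> y"
    using \<beta>_pos closure_subset assms by blast
  then have "0 \<le> \<beta> y * S y powr q * I y powr p"
    by simp
  then have "- \<gamma> y * I y \<le> - dI * laplacian I y"
    using I_laplacian[OF assms] by (simp add: reaction_def)
  then show ?thesis
    using dI_pos by (simp add: laplacian_def sum_negf field_simps)
qed

lemma infected_pos: "x \<in> closure \<Omega> \<Longrightarrow> 0 < I x"
proof (rule ccontr)
  assume "x \<in> closure \<Omega>" "\<not> 0 < I x"
  then have "I x = 0"
    using I_nonneg[of x] by simp
  obtain GI where nI: "neumann_C1 \<Omega> \<rho> I GI"
    and dI: "axis_derivs_on \<Omega> I (\<lambda>i. partial i I) (\<lambda>i. partial i (\<lambda>y. partial i I y))"
    by (rule neumann_data)
  obtain C\<^sub>\<gamma> where C\<^sub>\<gamma>: "\<forall>x\<in>closure \<Omega>. \<gamma> x \<le> C\<^sub>\<gamma>"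
    using continuous_attains_sup[OF compact_closure_domain closure_domain_nonempty \<gamma>_cont] by blast
  have "\<forall>x\<in>closure \<Omega>. (- 1) * I x = 0"
  proof (rule neumann_strong_maximum_principle[OF domain neumann_C1_cmult[OF nI] axis_derivs_on_cmult[OF dI],
        where c = "\<lambda>x. \<gamma> x / dI" and C = "C\<^sub>\<gamma> / dI"])
    show "\<forall>y\<in>\<Omega>. \<gamma> y / dI * (- 1 * I y) \<le> (\<Sum>i\<in>UNIV. - 1 * partial i (\<lambda>z. partial i I z) y)"
      using neg_infected_subsolution by blast
    show "\<forall>y\<in>\<Omega>. 0 \<le> \<gamma> y / dI \<and> \<gamma> y / dI \<le> C\<^sub>\<gamma> / dI"
    proof
      fix y assume "y \<in> \<Omega>"
      then have "0 < \<gamma> y" "\<gamma> y \<le> C\<^sub>\<gamma>"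
        using \<gamma>_pos C\<^sub>\<gamma> closure_subset by blast+
      then show "0 \<le> \<gamma> y / dI \<and> \<gamma> y / dI \<le> C\<^sub>\<gamma> / dI"
        using dI_pos by (simp add: divide_right_mono)
    qed
  qed (use I_nonneg \<open>x \<in> closure \<Omega>\<close> \<open>I x = 0\<close> in auto)
  moreover obtain y where "y \<in> \<Omega>" "I y \<noteq> 0"
    using I_nonzero by blast
  ultimately show False
    using closure_subset by force
qed

text \<open>Otherwise \<open>S\<close> would be strictly subharmonic near its maximum point.\<close>
lemma reaction_nonpos_at_susceptible_max:
  assumes "x\<^sub>1 \<in> closure \<Omega>" "\<forall>x\<in>closure \<Omega>. S x \<le> S x\<^sub>1"
  shows "reaction x\<^sub>1 \<le> 0"
proof (rule ccontr)
  assume "\<not> reaction x\<^sub>1 \<le> 0"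
  then have "0 < reaction x\<^sub>1"
    by simp
  then obtain d where "0 < d"
    and near: "\<forall>x\<in>closure \<Omega>. dist x x\<^sub>1 < d \<longrightarrow> dist (reaction x) (reaction x\<^sub>1) < reaction x\<^sub>1"
    using reaction_cont assms(1) unfolding continuous_on_iff by blast
  have pos: "0 < reaction x" if "x \<in> closure \<Omega>" "dist x x\<^sub>1 < d" for x
    using near that by (auto simp: dist_real_def)
  obtain GS where "neumann_C1 \<Omega> \<rho> S GS"
    and dS: "axis_derivs_on \<Omega> S (\<lambda>i. partial i S) (\<lambda>i. partial i (\<lambda>y. partial i S y))"
    by (rule neumann_data)
  then show False
  proof (rule neumann_no_max_where_strictly_subharmonic[OF domain _ _ assms \<open>0 < d\<close>])
    show "\<forall>x\<in>\<Omega> \<inter> ball x\<^sub>1 d. 0 < (\<Sum>i\<in>UNIV. partial i (\<lambda>y. partial i S y) x)"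
    proof
      fix x assume "x \<in> \<Omega> \<inter> ball x\<^sub>1 d"
      then have "0 < dS * laplacian S x"
        using pos[of x] S_laplacian[of x] closure_subset by (auto simp: dist_commute)
      then show "0 < (\<Sum>i\<in>UNIV. partial i (\<lambda>y. partial i S y) x)"
        using dS_pos by (simp add: laplacian_def zero_less_mult_iff)
    qed
  qed
qed

lemma susceptible_le:
  assumes "\<forall>x\<in>closure \<Omega>. I x \<le> K"
  shows "\<forall>x\<in>closure \<Omega>. S x \<le> r_max powr (1 / q) * K powr ((1 - p) / q)"
proof -
  obtain x\<^sub>1 where "x\<^sub>1 \<in> closure \<Omega>" and max: "\<forall>x\<in>closure \<Omega>. S x \<le> S x\<^sub>1"
    using continuous_attains_sup[OF compact_closure_domain closure_domain_nonempty S_cont] by blast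
  have "0 < I x\<^sub>1" "0 < \<beta> x\<^sub>1"
    using infected_pos \<beta>_pos \<open>x\<^sub>1 \<in> closure \<Omega>\<close> by auto
  have "\<beta> x\<^sub>1 * S x\<^sub>1 powr q * I x\<^sub>1 powr p \<le> \<gamma> x\<^sub>1 * I x\<^sub>1"
    using reaction_nonpos_at_susceptible_max[OF \<open>x\<^sub>1 \<in> closure \<Omega>\<close> max] by (simp add: reaction_def)
  then have "S x\<^sub>1 powr q \<le> (\<gamma> x\<^sub>1 / \<beta> x\<^sub>1) * I x\<^sub>1 powr (1 - p)"
    using \<open>0 < I x\<^sub>1\<close> \<open>0 < \<beta> x\<^sub>1\<close> by (simp add: powr_diff field_simps)
  also have "\<dots> \<le> r_max * K powr (1 - p)"
    using ratio_le_r_max[OF \<open>x\<^sub>1 \<in> closure \<Omega>\<close>] assms \<open>x\<^sub>1 \<in> closure \<Omega>\<close> \<open>0 < I x\<^sub>1\<close> p_less_1 r_max_pos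
    by (intro mult_mono powr_mono2) auto
  finally have "(S x\<^sub>1 powr q) powr (1 / q) \<le> (r_max * K powr (1 - p)) powr (1 / q)"
    using q_pos by (intro powr_mono2) auto
  then have "S x\<^sub>1 \<le> r_max powr (1 / q) * K powr ((1 - p) / q)"
    using S_nonneg[OF \<open>x\<^sub>1 \<in> closure \<Omega>\<close>] q_pos r_max_pos by (simp add: powr_powr powr_mult)
  then show ?thesis
    using max by fastforce
qed

lemma infected_le_total_density:
  assumes "\<forall>x\<in>closure \<Omega>. dS * S x + dI * I x = \<kappa>" "x \<in> closure \<Omega>"
  shows "I x \<le> \<kappa> / dI"
proof -
  have "0 \<le> dS * S x" "dS * S x + dI * I x = \<kappa>"
    using dS_pos S_nonneg[OF assms(2)] assms by simp_all
  then have "I x * dI \<le> \<kappa>"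
    by (simp only: mult.commute[of "I x"])
  then show ?thesis
    using dI_pos by (simp add: pos_le_divide_eq)
qed

lemma mass_le: "\<forall>x\<in>\<Omega>. S x + I x \<le> T \<Longrightarrow> N \<le> T * measure lebesgue \<Omega>"
  using integral_le_const_measure[OF lmeasurable_domain integrable_total] total_mass by simp

lemma mass_ge: "\<forall>x\<in>\<Omega>. T \<le> S x + I x \<Longrightarrow> T * measure lebesgue \<Omega> \<le> N"
  using const_measure_le_integral[OF lmeasurable_domain integrable_total] total_mass by simp

lemma measure_domain_pos: "0 < measure lebesgue \<Omega>"
proof -
  have "continuous_on (closure \<Omega>) (\<lambda>x. S x + I x)"
    using S_cont I_cont by (intro continuous_intros)
  then obtain x\<^sub>m where "\<forall>x\<in>closure \<Omega>. S x + I x \<le> S x\<^sub>m + I x\<^sub>m"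
    using continuous_attains_sup[OF compact_closure_domain closure_domain_nonempty] by blast
  then have "N \<le> (S x\<^sub>m + I x\<^sub>m) * measure lebesgue \<Omega>"
    using closure_subset by (intro mass_le) blast
  then have "measure lebesgue \<Omega> \<noteq> 0"
    using N_pos by auto
  then show ?thesis
    by (simp add: less_le)
qed

lemma mass_density_le:
  assumes "\<forall>x\<in>closure \<Omega>. dS * S x + dI * I x = \<kappa>"
  shows "N / measure lebesgue \<Omega> \<le> \<kappa> / dI + r_max powr (1 / q) * (\<kappa> / dI) powr ((1 - p) / q)"
proof -
  have I_le: "\<forall>x\<in>closure \<Omega>. I x \<le> \<kappa> / dI"
    using infected_le_total_density[OF assms] by blast
  have "S x + I x \<le> \<kappa> / dI + r_max powr (1 / q) * (\<kappa> / dI) powr ((1 - p) / q)" if "x \<in> \<Omega>" for x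
  proof -
    have "x \<in> closure \<Omega>"
      using that closure_subset by blast
    then show ?thesis
      using I_le susceptible_le[OF I_le] by (simp add: add.commute add_mono)
  qed
  then show ?thesis
    using mass_le measure_domain_pos by (simp add: pos_divide_le_eq)
qed

lemma total_density_le_mass_density:
  assumes "\<forall>x\<in>closure \<Omega>. dS * S x + dI * I x = \<kappa>" "dS \<le> dI"
  shows "\<kappa> / dI \<le> N / measure lebesgue \<Omega>"
proof -
  have "\<kappa> / dI \<le> S x + I x" if "x \<in> \<Omega>" for x
  proof -
    have "x \<in> closure \<Omega>"
      using that closure_subset by blast
    then have "dS * S x \<le> dI * S x" "dS * S x + dI * I x = \<kappa>"
      using mult_right_mono[OF assms(2) S_nonneg] assms(1) by simp_all
    then have "\<kappa> \<le> dI * S x + dI * I x"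
      by linarith
    then show ?thesis
      using dI_pos by (simp add: pos_divide_le_eq algebra_simps)
  qed
  then have "\<kappa> / dI * measure lebesgue \<Omega> \<le> N"
    by (intro mass_ge) blast
  then show ?thesis
    using measure_domain_pos by (simp add: pos_le_divide_eq)
qed

end

theorem lemma5p3:
  fixes \<Omega> :: "(real^'n::finite) set" and \<rho> :: "real^'n \<Rightarrow> real"
    and \<beta> \<gamma> S I :: "real^'n \<Rightarrow> real" and N q p dS dI :: real
  assumes "bounded_smooth_domain \<Omega> \<rho>"
    and "\<forall>x\<in>closure \<Omega>. \<beta> x > 0" and "\<forall>x\<in>closure \<Omega>. \<gamma> x > 0"
    and "holder_on (closure \<Omega>) \<beta>" and "holder_on (closure \<Omega>) \<gamma>"
    and "N > 0" and "q > 0" and "0 < p" and "p < 1" and "dS > 0" and "dI > 0"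
    and "endemic_equilibrium \<Omega> \<rho> dS dI \<beta> \<gamma> N q p S I"
  shows "\<exists>\<kappa>>0. (\<forall>x\<in>closure \<Omega>. dS * S x + dI * I x = \<kappa>) \<and>
     (\<forall>M. M > 0 \<and> N / measure lebesgue \<Omega> =
            M + (Sup ((\<lambda>x. \<gamma> x / \<beta> x) ` closure \<Omega>)) powr (1 / q) * M powr ((1 - p) / q)
          \<longrightarrow> \<kappa> / dI \<ge> M) \<and>
     (dS \<le> dI \<longrightarrow> \<kappa> / dI \<le> N / measure lebesgue \<Omega>)"
proof -
  interpret sis_equilibrium \<Omega> \<rho> \<beta> \<gamma> S I N q p dS dI
    using assms holder_on_imp_continuous_on by unfold_locales auto
  obtain \<kappa> where "0 < \<kappa>" and \<kappa>: "\<forall>x\<in>closure \<Omega>. dS * S x + dI * I x = \<kappa>"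
    by (rule total_density_constant)
  have "M \<le> \<kappa> / dI"
    if "N / measure lebesgue \<Omega> = M + r_max powr (1 / q) * M powr ((1 - p) / q)" for M
  proof (rule le_of_add_mult_powr_le)
    show "0 \<le> r_max powr (1 / q)" "0 \<le> (1 - p) / q" "0 < \<kappa> / dI"
      using q_pos p_less_1 \<open>0 < \<kappa>\<close> dI_pos by simp_all
    show "M + r_max powr (1 / q) * M powr ((1 - p) / q)
        \<le> \<kappa> / dI + r_max powr (1 / q) * (\<kappa> / dI) powr ((1 - p) / q)"
      using mass_density_le[OF \<kappa>] that by simp
  qed
  then show ?thesis
    using \<open>0 < \<kappa>\<close> \<kappa> total_density_le_mass_density[OF \<kappa>] unfolding r_max_def by blast
qed

end
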